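(* Let $X_1,\dots,X_n$ be i.i.d. $\mathsf{GOE}(d)$ and suppose $n\ge C_3dr^2$ for a sufficiently large constant $C_3$. Then with probability at least $1-2\exp(-C_1dr)-2\exp(-C_2n)$ (for positive constants $C_1,C_2$), \[ \sup_{V\in\mathbb{R}^{d\times r}:\ \|V\|\le 1}\big\|(\mathcal{X}^*\mathcal{X}-\mathcal{I})(VV^\top)\big\|\le C\,\frac{r\sqrt d}{\sqrt n}. \]
   Context: $\mathsf{GOE}(d)$ denotes the law of a symmetric $d\times d$ matrix whose diagonal entries are i.i.d. $N(0,1)$ and whose entries above the diagonal are i.i.d. $N(0,1/2)$, independent of the diagonal. $\mathcal{X}:\mathbb{R}^{d\times d}\to\mathbb{R}^n$ is $\mathcal{X}(A)_i=n^{-1/2}\langle X_i,A\rangle$ (Frobenius inner product), $\mathcal{X}^*$ its adjoint so that $\mathcal{X}^*\mathcal{X}(A)=\frac1n\sum_i\langle X_i,A\rangle X_i$, and $\mathcal{I}$ the identity operator. $\|\cdot\|$ denotes the spectral norm. *)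

theory Defs
  imports "HOL-Probability.Probability"
begin

text \<open>Matrices are represented as functions nat => nat => real; only the
entries with indices inside the stated dimensions are ever used.\<close>

definition spec_norm :: "nat \<Rightarrow> nat \<Rightarrow> (nat \<Rightarrow> nat \<Rightarrow> real) \<Rightarrow> real" where
  "spec_norm m k A = Sup {sqrt (\<Sum>i<m. (\<Sum>j<k. A i j * x j)\<^sup>2) | x.
                          (\<Sum>j<k. (x j)\<^sup>2) \<le> 1}"

definition frob :: "nat \<Rightarrow> (nat \<Rightarrow> nat \<Rightarrow> real) \<Rightarrow> (nat \<Rightarrow> nat \<Rightarrow> real) \<Rightarrow> real" where
  "frob d A B = (\<Sum>i<d. \<Sum>j<d. A i j * B i j)"

definition outer_VVt :: "nat \<Rightarrow> (nat \<Rightarrow> nat \<Rightarrow> real) \<Rightarrow> (nat \<Rightarrow> nat \<Rightarrow> real)" where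
  "outer_VVt r V = (\<lambda>i j. \<Sum>l<r. V i l * V j l)"

text \<open>Law of the independent free entries of n i.i.d. GOE(d) matrices:
index (k,i,j) with k < n and i \<le> j < d; diagonal entries N(0,1),
off-diagonal entries N(0,1/2) (standard deviation sqrt(1/2)).\<close>
definition goe_index :: "nat \<Rightarrow> nat \<Rightarrow> (nat \<times> nat \<times> nat) set" where
  "goe_index n d = {(k,i,j). k < n \<and> i \<le> j \<and> j < d}"

definition goe_sample_space :: "nat \<Rightarrow> nat \<Rightarrow> (nat \<times> nat \<times> nat \<Rightarrow> real) measure" where
  "goe_sample_space n d = (\<Pi>\<^sub>M (k,i,j)\<in>goe_index n d.
      density lborel (normal_density 0 (if i = j then 1 else sqrt (1/2))))"

definition goe_mat :: "(nat \<times> nat \<times> nat \<Rightarrow> real) \<Rightarrow> nat \<Rightarrow> (nat \<Rightarrow> nat \<Rightarrow> real)" where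
  "goe_mat \<omega> k = (\<lambda>i j. \<omega> (k, min i j, max i j))"

definition XsX_minus_I :: "nat \<Rightarrow> nat \<Rightarrow> (nat \<Rightarrow> nat \<Rightarrow> nat \<Rightarrow> real)
      \<Rightarrow> (nat \<Rightarrow> nat \<Rightarrow> real) \<Rightarrow> (nat \<Rightarrow> nat \<Rightarrow> real)" where
  "XsX_minus_I n d X A = (\<lambda>i j. (1 / real n) * (\<Sum>k<n. frob d (X k) A * X k i j) - A i j)"

end

(*
  For V, W of spectral norm at most 1 and unit vectors u, u', the number
  u^T (X^*X - I)(V W^T + W V^T) u' equals (1/n) sum_k <X_k, A> <X_k, B> - <A, B> with
  A = V W^T + W V^T and B = u u'^T. Polarization turns it into the difference of two
  deviations (1/n) sum_k <X_k, C>^2 - E <X_k, C>^2; for GOE samples the <X_k, C> are i.i.d.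
  centred normals, so a chi-square Chernoff bound controls each deviation up to
  probability 2 exp (- n t^2 / 16). A union bound over 1/8-nets of the unit balls, of sizes
  17^(d r) and 17^d, and the usual net argument extend the bound to all V, u, u' at once;
  t = 40 sqrt (d r / n) makes the union bound cost 2 exp (- d r).
*)

theory Submission
  imports Defs
begin

lemma power2_sum_le: "(x + y)\<^sup>2 \<le> 2 * x\<^sup>2 + 2 * (y::real)\<^sup>2"
proof -
  have "0 \<le> (x - y)\<^sup>2" by simp
  moreover have "(x + y)\<^sup>2 + (x - y)\<^sup>2 = 2 * x\<^sup>2 + 2 * y\<^sup>2" by (simp add: power2_eq_square algebra_simps)
  ultimately show ?thesis by linarith
qed

section \<open>The spectral norm\<close>

lemma L2_set_scale: "L2_set (\<lambda>i. c * f i) A = \<bar>c\<bar> * L2_set f A"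
  unfolding L2_set_def
  by (simp add: power_mult_distrib real_sqrt_mult sum_distrib_left[symmetric])

lemma L2_set_divide: "L2_set (\<lambda>i. f i / c) A = L2_set f A / \<bar>c\<bar>"
  using L2_set_scale[of "1/c" f A] by (simp add: field_simps)

lemma abs_le_L2_set: "finite A \<Longrightarrow> i \<in> A \<Longrightarrow> \<bar>f i\<bar> \<le> L2_set f A"
  unfolding L2_set_def
  by (metis member_le_sum real_sqrt_abs real_sqrt_le_mono zero_le_power2)

lemma spec_norm_eq_Sup_L2_set:
  "spec_norm m k A = Sup {L2_set (\<lambda>i. \<Sum>j<k. A i j * x j) {..<m} | x. L2_set x {..<k} \<le> 1}"
  by (simp add: spec_norm_def L2_set_def)

lemma L2_set_mat_vec_le_frobenius:
  "L2_set (\<lambda>i. \<Sum>j<k. A i j * x j) {..<m} \<le> sqrt (\<Sum>i<m. \<Sum>j<k. (A i j)\<^sup>2) * L2_set x {..<k}"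
proof -
  have "(\<Sum>j<k. A i j * x j)\<^sup>2 \<le> (\<Sum>j<k. (A i j)\<^sup>2) * (\<Sum>j<k. (x j)\<^sup>2)" for i
  proof -
    have "\<bar>\<Sum>j<k. A i j * x j\<bar> \<le> (\<Sum>j<k. \<bar>A i j\<bar> * \<bar>x j\<bar>)"
      by (rule order.trans[OF sum_abs]) (simp add: abs_mult)
    also have "\<dots> \<le> L2_set (A i) {..<k} * L2_set x {..<k}" by (rule L2_set_mult_ineq)
    finally have "\<bar>\<Sum>j<k. A i j * x j\<bar>\<^sup>2 \<le> (L2_set (A i) {..<k} * L2_set x {..<k})\<^sup>2"
      by (rule power_mono) simp
    then show ?thesis by (simp add: L2_set_def power_mult_distrib sum_nonneg)
  qed
  then have "(\<Sum>i<m. (\<Sum>j<k. A i j * x j)\<^sup>2) \<le> (\<Sum>i<m. (\<Sum>j<k. (A i j)\<^sup>2) * (\<Sum>j<k. (x j)\<^sup>2))"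
    by (rule sum_mono)
  also have "\<dots> = (\<Sum>i<m. \<Sum>j<k. (A i j)\<^sup>2) * (\<Sum>j<k. (x j)\<^sup>2)"
    by (simp add: sum_distrib_right)
  finally show ?thesis
    by (simp add: L2_set_def flip: real_sqrt_mult)
qed

lemma bdd_above_spec_norm_set:
  "bdd_above {L2_set (\<lambda>i. \<Sum>j<k. (A :: nat \<Rightarrow> nat \<Rightarrow> real) i j * x j) {..<m} | x. L2_set x {..<k} \<le> 1}"
proof (rule bdd_aboveI[where M = "sqrt (\<Sum>i<m. \<Sum>j<k. (A i j)\<^sup>2)"], clarify)
  fix x :: "nat \<Rightarrow> real" assume "L2_set x {..<k} \<le> 1"
  then show "L2_set (\<lambda>i. \<Sum>j<k. A i j * x j) {..<m} \<le> sqrt (\<Sum>i<m. \<Sum>j<k. (A i j)\<^sup>2)"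
    by (intro order.trans[OF L2_set_mat_vec_le_frobenius] mult_left_le) (auto intro!: sum_nonneg)
qed

lemma spec_norm_upper:
  "L2_set x {..<k} \<le> 1 \<Longrightarrow> L2_set (\<lambda>i. \<Sum>j<k. A i j * x j) {..<m} \<le> spec_norm m k A"
  unfolding spec_norm_eq_Sup_L2_set by (rule cSup_upper[OF _ bdd_above_spec_norm_set]) blast

lemma spec_norm_least:
  assumes "\<And>x. L2_set x {..<k} \<le> 1 \<Longrightarrow> L2_set (\<lambda>i. \<Sum>j<k. A i j * x j) {..<m} \<le> b"
  shows "spec_norm m k A \<le> b"
  unfolding spec_norm_eq_Sup_L2_set
proof (rule cSup_least)
  have "L2_set (\<lambda>_. 0) {..<k} \<le> 1" by (simp add: L2_set_0')
  then show "{L2_set (\<lambda>i. \<Sum>j<k. A i j * x j) {..<m} | x. L2_set x {..<k} \<le> 1} \<noteq> {}"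
    by blast
qed (use assms in blast)

lemma spec_norm_nonneg: "0 \<le> spec_norm m k A"
  using spec_norm_upper[of "\<lambda>_. 0" k A m] by (simp add: L2_set_0')

lemma spec_norm_le_frobenius: "spec_norm m k A \<le> sqrt (\<Sum>i<m. \<Sum>j<k. (A i j)\<^sup>2)"
  by (intro spec_norm_least order.trans[OF L2_set_mat_vec_le_frobenius] mult_left_le)
     (auto intro!: sum_nonneg)

lemma spec_norm_zero: "spec_norm m k (\<lambda>i j. 0) = 0"
  using spec_norm_le_frobenius[of m k "\<lambda>i j. 0"] spec_norm_nonneg[of m k "\<lambda>i j. 0"] by simp

lemma spec_norm_mat_vec:
  "L2_set (\<lambda>i. \<Sum>j<k. A i j * x j) {..<m} \<le> spec_norm m k A * L2_set x {..<k}"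
proof (cases "L2_set x {..<k} = 0")
  case True
  then show ?thesis using spec_norm_nonneg[of m k A] by (simp add: L2_set_eq_0_iff L2_set_0')
next
  case False
  define c where "c = L2_set x {..<k}"
  have c: "c > 0" using False L2_set_nonneg[of x "{..<k}"] unfolding c_def by linarith
  have "L2_set (\<lambda>i. \<Sum>j<k. A i j * (x j / c)) {..<m} \<le> spec_norm m k A"
    using c by (intro spec_norm_upper) (simp add: L2_set_divide c_def)
  moreover have "(\<lambda>i. \<Sum>j<k. A i j * (x j / c)) = (\<lambda>i. (\<Sum>j<k. A i j * x j) / c)"
    by (simp add: sum_divide_distrib)
  ultimately show ?thesis using c by (simp add: L2_set_divide c_def[symmetric] field_simps)
qed

lemma spec_norm_triangle:
  "spec_norm m k (\<lambda>i j. A i j + B i j) \<le> spec_norm m k A + spec_norm m k B"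
proof (rule spec_norm_least)
  fix x :: "nat \<Rightarrow> real" assume x: "L2_set x {..<k} \<le> 1"
  have "L2_set (\<lambda>i. \<Sum>j<k. (A i j + B i j) * x j) {..<m}
      = L2_set (\<lambda>i. (\<Sum>j<k. A i j * x j) + (\<Sum>j<k. B i j * x j)) {..<m}"
    by (simp add: distrib_right sum.distrib)
  also have "\<dots> \<le> L2_set (\<lambda>i. \<Sum>j<k. A i j * x j) {..<m} + L2_set (\<lambda>i. \<Sum>j<k. B i j * x j) {..<m}"
    by (rule L2_set_triangle_ineq)
  also have "\<dots> \<le> spec_norm m k A + spec_norm m k B"
    by (intro add_mono spec_norm_upper x)
  finally show "L2_set (\<lambda>i. \<Sum>j<k. (A i j + B i j) * x j) {..<m} \<le> spec_norm m k A + spec_norm m k B" .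
qed

lemma spec_norm_scale: "spec_norm m k (\<lambda>i j. c * A i j) = \<bar>c\<bar> * spec_norm m k A"
proof -
  have le: "spec_norm m k (\<lambda>i j. c * A i j) \<le> \<bar>c\<bar> * spec_norm m k A" for c A
  proof (rule spec_norm_least)
    fix x :: "nat \<Rightarrow> real" assume "L2_set x {..<k} \<le> 1"
    then have "\<bar>c\<bar> * L2_set (\<lambda>i. \<Sum>j<k. A i j * x j) {..<m} \<le> \<bar>c\<bar> * spec_norm m k A"
      by (intro mult_left_mono spec_norm_upper) auto
    moreover have "(\<lambda>i. \<Sum>j<k. c * A i j * x j) = (\<lambda>i. c * (\<Sum>j<k. A i j * x j))"
      by (simp add: sum_distrib_left algebra_simps)
    ultimately show "L2_set (\<lambda>i. \<Sum>j<k. c * A i j * x j) {..<m} \<le> \<bar>c\<bar> * spec_norm m k A"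
      by (simp add: L2_set_scale)
  qed
  show ?thesis
  proof (cases "c = 0")
    case True
    then show ?thesis using spec_norm_zero by simp
  next
    case False
    have "spec_norm m k A \<le> \<bar>1/c\<bar> * spec_norm m k (\<lambda>i j. c * A i j)"
      using le[of "1/c" "\<lambda>i j. c * A i j"] False by simp
    then have "\<bar>c\<bar> * spec_norm m k A \<le> spec_norm m k (\<lambda>i j. c * A i j)"
      using False by (simp add: field_simps)
    with le[of c A] show ?thesis by simp
  qed
qed

lemma L2_set_column_le_spec_norm:
  assumes "l < k"
  shows "L2_set (\<lambda>i. A i l) {..<m} \<le> spec_norm m k A"
proof -
  let ?e = "\<lambda>j. if j = l then 1 else 0 :: real"
  have "L2_set ?e {..<k} = 1"
    using assms by (simp add: L2_set_def if_distrib[of "\<lambda>x. x\<^sup>2"] sum.If_cases)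
  moreover have "(\<lambda>i. \<Sum>j<k. A i j * ?e j) = (\<lambda>i. A i l)"
    using assms by (simp add: if_distrib[of "\<lambda>x. _ * x"] sum.If_cases)
  ultimately show ?thesis using spec_norm_upper[of ?e k A m] by simp
qed

lemma abs_entry_le_spec_norm: "i < m \<Longrightarrow> j < k \<Longrightarrow> \<bar>A i j\<bar> \<le> spec_norm m k A"
  using abs_le_L2_set[of "{..<m}" i "\<lambda>i. A i j"] L2_set_column_le_spec_norm[of j k A m] by simp

lemma sum_column_squares_le:
  assumes "spec_norm m k A \<le> 1" "l < k"
  shows "(\<Sum>i<m. (A i l)\<^sup>2) \<le> 1"
  using order.trans[OF L2_set_column_le_spec_norm[OF assms(2)] assms(1)] by (simp add: L2_set_def)

lemma spec_norm_column_le: "spec_norm d 1 (\<lambda>i j. x i) \<le> L2_set x {..<d}"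
  using spec_norm_le_frobenius[of d 1 "\<lambda>i j. x i"] by (simp add: L2_set_def)

lemma spec_norm_cong:
  assumes "\<And>i j. i < m \<Longrightarrow> j < k \<Longrightarrow> A i j = B i j"
  shows "spec_norm m k A = spec_norm m k B"
proof -
  have "L2_set (\<lambda>i. \<Sum>j<k. A i j * x j) {..<m} = L2_set (\<lambda>i. \<Sum>j<k. B i j * x j) {..<m}" for x
    using assms by (intro L2_set_cong refl sum.cong) auto
  then show ?thesis unfolding spec_norm_eq_Sup_L2_set by simp
qed

section \<open>Volumetric nets\<close>

lemma emeasure_lborel_affine_preimage:
  assumes r: "r > 0" and B: "B \<in> sets borel"
  shows "emeasure lborel {t::real. (t - a) / r \<in> B} = ennreal r * emeasure lborel B"
proof -
  have m: "{t::real. (t - a) / r \<in> B} \<in> sets borel"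
  proof -
    have "(\<lambda>t::real. (t - a) / r) \<in> borel_measurable borel" by simp
    from measurable_sets[OF this B] have "(\<lambda>t::real. (t - a) / r) -` B \<inter> space borel \<in> sets borel" .
    then show ?thesis by (simp add: vimage_def)
  qed
  have "emeasure lborel {t::real. (t - a) / r \<in> B} = (\<integral>\<^sup>+x. indicator {t::real. (t - a) / r \<in> B} x \<partial>lborel)"
    using m by simp
  also have "\<dots> = ennreal \<bar>r\<bar> * (\<integral>\<^sup>+x. indicator {t::real. (t - a) / r \<in> B} (a + r * x) \<partial>lborel)"
    using m r by (intro nn_integral_real_affine) auto
  also have "(\<lambda>x. indicator {t::real. (t - a) / r \<in> B} (a + r * x) :: ennreal) = indicator B"
    using r by (auto simp: indicator_def fun_eq_iff)
  also have "(\<integral>\<^sup>+x. indicator B x \<partial>lborel) = emeasure lborel B"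
    using B by simp
  finally show ?thesis using r by simp
qed

text \<open>Comparing Lebesgue volumes of disjoint balls of radius \<open>\<epsilon>/2\<close> gives the bound \<open>(1 + 2/\<epsilon>)^card A\<close>
  on the size of an \<open>\<epsilon>\<close>-net of the unit ball of \<open>p\<close>; the two cubes only make the volume of the unit ball
  positive and finite.\<close>

locale coordinate_norm =
  fixes A :: "'a set" and p :: "('a \<Rightarrow> real) \<Rightarrow> real" and \<delta> :: real
  assumes finite_A: "finite A"
    and p_cong: "\<And>f g. (\<And>i. i \<in> A \<Longrightarrow> f i = g i) \<Longrightarrow> p f = p g"
    and p_scale: "\<And>c f. p (\<lambda>i. c * f i) = \<bar>c\<bar> * p f"
    and p_add: "\<And>f g. p (\<lambda>i. f i + g i) \<le> p f + p g"
    and unit_ball_in_cube: "\<And>f i. p f \<le> 1 \<Longrightarrow> i \<in> A \<Longrightarrow> \<bar>f i\<bar> \<le> 1"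
    and \<delta>_pos: "\<delta> > 0"
    and cube_in_unit_ball: "\<And>f. (\<And>i. i \<in> A \<Longrightarrow> \<bar>f i\<bar> \<le> \<delta>) \<Longrightarrow> p f \<le> 1"
    and unit_ball_sets:
      "{f \<in> space (PiM A (\<lambda>_. lborel)). p f \<le> 1} \<in> sets (PiM A (\<lambda>_. lborel :: real measure))"
begin

abbreviation Leb where "Leb \<equiv> PiM A (\<lambda>_. lborel :: real measure)"
definition unit_ball where "unit_ball = {f \<in> space Leb. p f \<le> 1}"
definition p_ball where "p_ball y r = {f \<in> space Leb. p (\<lambda>i. f i - y i) \<le> r}"
definition rescale where "rescale y r = (\<lambda>f. \<lambda>i\<in>A. (f i - y i) / r)"

lemma p_zero: "p (\<lambda>_. 0) = 0"
  using p_scale[of 0 "\<lambda>_. 0"] by simp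

lemma p_diff_commute: "p (\<lambda>i. f i - g i) = p (\<lambda>i. g i - f i)"
  using p_scale[of "-1" "\<lambda>i. f i - g i"] by simp

lemma p_diff_triangle: "p (\<lambda>i. f i - h i) \<le> p (\<lambda>i. f i - g i) + p (\<lambda>i. g i - h i)"
  using p_add[of "\<lambda>i. f i - g i" "\<lambda>i. g i - h i"] by simp

lemma rescale_measurable: "rescale y r \<in> measurable Leb Leb"
  unfolding rescale_def by (intro measurable_restrict) simp

lemma unit_ball_in_sets: "unit_ball \<in> sets Leb"
  using unit_ball_sets by (simp add: unit_ball_def)

lemma p_ball_eq_vimage:
  assumes r: "r > 0"
  shows "p_ball y r = rescale y r -` unit_ball \<inter> space Leb"
proof -
  have "p (rescale y r f) \<le> 1 \<longleftrightarrow> p (\<lambda>i. f i - y i) \<le> r" for f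
  proof -
    have "p (rescale y r f) = p (\<lambda>i. (1/r) * (f i - y i))"
      by (rule p_cong) (simp add: rescale_def)
    also have "\<dots> = p (\<lambda>i. f i - y i) / r"
      using r p_scale[of "1/r" "\<lambda>i. f i - y i"] by simp
    finally show ?thesis using r by (simp add: divide_le_eq)
  qed
  moreover have "rescale y r f \<in> space Leb" for f
    using measurable_space[OF rescale_measurable] by (auto simp: rescale_def space_PiM)
  ultimately show ?thesis using r by (auto simp: p_ball_def unit_ball_def)
qed

lemma p_ball_sets: "r > 0 \<Longrightarrow> p_ball y r \<in> sets Leb"
  using p_ball_eq_vimage measurable_sets[OF rescale_measurable unit_ball_in_sets] by simp

lemma emeasure_rescale_vimage_PiE:
  assumes r: "r > 0" and B: "\<And>i. i \<in> A \<Longrightarrow> B i \<in> sets lborel"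
  shows "emeasure Leb (rescale y r -` Pi\<^sub>E A B \<inter> space Leb) = (\<Prod>i\<in>A. ennreal r * emeasure lborel (B i))"
proof -
  interpret product_sigma_finite "\<lambda>_. lborel :: real measure" ..
  have "rescale y r -` Pi\<^sub>E A B \<inter> space Leb = Pi\<^sub>E A (\<lambda>i. {t. (t - y i) / r \<in> B i})"
    by (auto simp: rescale_def space_PiM PiE_def Pi_def extensional_def)
  also have "emeasure Leb \<dots> = (\<Prod>i\<in>A. emeasure lborel {t. (t - y i) / r \<in> B i})"
  proof (rule emeasure_PiM[OF finite_A])
    fix i assume i: "i \<in> A"
    have "(\<lambda>t::real. (t - y i) / r) \<in> borel_measurable borel" by simp
    from measurable_sets[OF this] B[OF i]
    show "{t. (t - y i) / r \<in> B i} \<in> sets lborel" by (simp add: vimage_def)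
  qed
  also have "\<dots> = (\<Prod>i\<in>A. ennreal r * emeasure lborel (B i))"
    using B r by (intro prod.cong refl emeasure_lborel_affine_preimage) auto
  finally show ?thesis .
qed

lemma distr_rescale:
  assumes r: "r > 0"
  shows "distr Leb Leb (rescale y r) = density Leb (\<lambda>_. ennreal (r ^ card A))"
proof (rule measure_eqI_PiM_finite[where I = A and M = "\<lambda>_. lborel"])
  interpret product_sigma_finite "\<lambda>_. lborel :: real measure" ..
  show "finite A" by (rule finite_A)
  show "sets (distr Leb Leb (rescale y r)) = sets Leb" by simp
  show "sets (density Leb (\<lambda>_. ennreal (r ^ card A))) = sets Leb" by simp
  fix B :: "'a \<Rightarrow> real set" assume B: "\<And>i. i \<in> A \<Longrightarrow> B i \<in> sets lborel"
  have PB: "Pi\<^sub>E A B \<in> sets Leb" using B finite_A by (intro sets_PiM_I_finite) auto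
  have "emeasure (distr Leb Leb (rescale y r)) (Pi\<^sub>E A B) = emeasure Leb (rescale y r -` Pi\<^sub>E A B \<inter> space Leb)"
    using PB by (intro emeasure_distr rescale_measurable)
  also have "\<dots> = (\<Prod>i\<in>A. ennreal r * emeasure lborel (B i))"
    by (rule emeasure_rescale_vimage_PiE[OF r B])
  also have "\<dots> = ennreal (r ^ card A) * (\<Prod>i\<in>A. emeasure lborel (B i))"
    using r by (simp add: prod.distrib ennreal_power)
  also have "(\<Prod>i\<in>A. emeasure lborel (B i)) = emeasure Leb (Pi\<^sub>E A B)"
    using B by (simp add: emeasure_PiM[OF finite_A])
  also have "ennreal (r ^ card A) * emeasure Leb (Pi\<^sub>E A B) =
      emeasure (density Leb (\<lambda>_. ennreal (r ^ card A))) (Pi\<^sub>E A B)"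
    using PB by (rule emeasure_density_const[symmetric])
  finally show "emeasure (distr Leb Leb (rescale y r)) (Pi\<^sub>E A B) =
      emeasure (density Leb (\<lambda>_. ennreal (r ^ card A))) (Pi\<^sub>E A B)" .
next
  interpret product_sigma_finite "\<lambda>_. lborel :: real measure" ..
  define C where "C k = Pi\<^sub>E A (\<lambda>_. {- real k .. real k})" for k :: nat
  show "range C \<subseteq> prod_algebra A (\<lambda>_. lborel)"
    unfolding C_def by (auto intro!: prod_algebraI_finite finite_A)
  show "(\<Union>k. C k) = space Leb"
  proof safe
    fix f assume f: "f \<in> space Leb"
    obtain k :: nat where "Max ((\<lambda>i. \<bar>f i\<bar>) ` A) \<le> real k" using real_arch_simple by blast
    then have "\<forall>i\<in>A. \<bar>f i\<bar> \<le> real k"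
      using finite_A by (meson Max_ge finite_imageI image_eqI order_trans)
    then have "f \<in> C k" using f by (auto simp: C_def space_PiM PiE_def Pi_def abs_le_iff)
    then show "f \<in> (\<Union>k. C k)" by blast
  qed (auto simp: C_def space_PiM)
  fix k
  have "emeasure (distr Leb Leb (rescale y r)) (C k) = emeasure Leb (rescale y r -` C k \<inter> space Leb)"
    unfolding C_def using finite_A by (intro emeasure_distr rescale_measurable sets_PiM_I_finite) auto
  also have "\<dots> = (\<Prod>i\<in>A. ennreal r * emeasure lborel {- real k .. real k})"
    unfolding C_def by (rule emeasure_rescale_vimage_PiE[OF r]) simp
  also have "\<dots> < \<infinity>"
    by (simp add: less_top[symmetric] power_eq_top_ennreal ennreal_mult_eq_top_iff)
  finally show "emeasure (distr Leb Leb (rescale y r)) (C k) \<noteq> \<infinity>" by simp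
qed

lemma emeasure_p_ball:
  assumes r: "r > 0"
  shows "emeasure Leb (p_ball y r) = ennreal (r ^ card A) * emeasure Leb unit_ball"
proof -
  have "emeasure Leb (p_ball y r) = emeasure (distr Leb Leb (rescale y r)) unit_ball"
    unfolding p_ball_eq_vimage[OF r]
    by (rule emeasure_distr[symmetric, OF rescale_measurable unit_ball_in_sets])
  also have "\<dots> = ennreal (r ^ card A) * emeasure Leb unit_ball"
    unfolding distr_rescale[OF r] by (rule emeasure_density_const[OF unit_ball_in_sets])
  finally show ?thesis .
qed

lemma emeasure_unit_ball_bounds: "0 < emeasure Leb unit_ball" "emeasure Leb unit_ball < \<infinity>"
proof -
  interpret product_sigma_finite "\<lambda>_. lborel :: real measure" ..
  have cube: "emeasure Leb (Pi\<^sub>E A (\<lambda>_. {-c..c})) = (\<Prod>i\<in>A. emeasure lborel {-c..c::real})" for c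
    by (rule emeasure_PiM[OF finite_A]) auto
  have "Pi\<^sub>E A (\<lambda>_. {-\<delta>..\<delta>}) \<subseteq> unit_ball"
  proof
    fix f assume f: "f \<in> Pi\<^sub>E A (\<lambda>_. {-\<delta>..\<delta>})"
    then have "p f \<le> 1" by (intro cube_in_unit_ball) (auto simp: PiE_def Pi_def abs_le_iff)
    then show "f \<in> unit_ball" using f by (auto simp: unit_ball_def space_PiM PiE_def Pi_def)
  qed
  then have "emeasure Leb (Pi\<^sub>E A (\<lambda>_. {-\<delta>..\<delta>})) \<le> emeasure Leb unit_ball"
    by (intro emeasure_mono unit_ball_in_sets)
  moreover have "(\<Prod>i\<in>A. emeasure lborel {-\<delta>..\<delta>}) > 0"
    using \<delta>_pos finite_A by (simp add: ennreal_power)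
  ultimately show "0 < emeasure Leb unit_ball" using cube by simp
  have "unit_ball \<subseteq> Pi\<^sub>E A (\<lambda>_. {-1..1})"
    using unit_ball_in_cube by (auto simp: unit_ball_def space_PiM PiE_def Pi_def abs_le_iff)
  then have "emeasure Leb unit_ball \<le> emeasure Leb (Pi\<^sub>E A (\<lambda>_. {-1..1}))"
    using finite_A by (intro emeasure_mono sets_PiM_I_finite) auto
  also have "\<dots> < \<infinity>" using finite_A by (simp add: cube less_top[symmetric] power_eq_top_ennreal)
  finally show "emeasure Leb unit_ball < \<infinity>" .
qed

lemma card_separated_le:
  assumes \<epsilon>: "\<epsilon> > 0" and S: "S \<subseteq> unit_ball" "finite S"
    and sep: "\<And>y z. y \<in> S \<Longrightarrow> z \<in> S \<Longrightarrow> y \<noteq> z \<Longrightarrow> p (\<lambda>i. y i - z i) > \<epsilon>"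
  shows "real (card S) \<le> (1 + 2 / \<epsilon>) ^ card A"
proof -
  define v where "v = measure Leb unit_ball"
  have v: "emeasure Leb unit_ball = ennreal v"
    using emeasure_unit_ball_bounds(2) by (simp add: v_def emeasure_eq_ennreal_measure)
  have v_pos: "v > 0"
    using emeasure_unit_ball_bounds(1) by (simp add: v)
  have "disjoint_family_on (\<lambda>y. p_ball y (\<epsilon>/2)) S"
    unfolding disjoint_family_on_def
  proof (intro ballI impI, rule ccontr)
    fix y z assume yz: "y \<in> S" "z \<in> S" "y \<noteq> z" and "p_ball y (\<epsilon>/2) \<inter> p_ball z (\<epsilon>/2) \<noteq> {}"
    then obtain f where "p (\<lambda>i. f i - y i) \<le> \<epsilon>/2" "p (\<lambda>i. f i - z i) \<le> \<epsilon>/2"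
      by (auto simp: p_ball_def)
    then have "p (\<lambda>i. y i - z i) \<le> \<epsilon>"
      using p_diff_triangle[of y z f] p_diff_commute[of y f] by linarith
    then show False using sep[OF yz] by simp
  qed
  then have "(\<Sum>y\<in>S. emeasure Leb (p_ball y (\<epsilon>/2))) = emeasure Leb (\<Union>y\<in>S. p_ball y (\<epsilon>/2))"
    using S \<epsilon> by (intro sum_emeasure) (auto intro: p_ball_sets)
  also have "\<dots> \<le> emeasure Leb (p_ball (\<lambda>_. 0) (1 + \<epsilon>/2))"
  proof (intro emeasure_mono p_ball_sets subsetI)
    fix f assume "f \<in> (\<Union>y\<in>S. p_ball y (\<epsilon>/2))"
    then obtain y where "y \<in> S" "f \<in> p_ball y (\<epsilon>/2)" by blast
    then show "f \<in> p_ball (\<lambda>_. 0) (1 + \<epsilon>/2)"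
      using S p_diff_triangle[of f "\<lambda>_. 0" y] by (auto simp: p_ball_def unit_ball_def)
  qed (use \<epsilon> in simp)
  also have "\<dots> = ennreal ((1 + \<epsilon>/2) ^ card A * v)"
    using \<epsilon> v v_pos by (simp add: emeasure_p_ball ennreal_mult)
  also have "(\<Sum>y\<in>S. emeasure Leb (p_ball y (\<epsilon>/2))) = ennreal (real (card S) * (\<epsilon>/2) ^ card A * v)"
    using \<epsilon> v v_pos by (simp add: emeasure_p_ball ennreal_mult' ennreal_of_nat_eq_real_of_nat mult.assoc)
  finally have "real (card S) * (\<epsilon>/2) ^ card A * v \<le> (1 + \<epsilon>/2) ^ card A * v"
    using \<epsilon> v_pos by (simp add: ennreal_le_iff)
  then have "real (card S) * (\<epsilon>/2) ^ card A \<le> (1 + \<epsilon>/2) ^ card A"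
    using v_pos by simp
  then have "real (card S) \<le> (1 + \<epsilon>/2) ^ card A / (\<epsilon>/2) ^ card A"
    using \<epsilon> by (simp add: pos_le_divide_eq)
  also have "\<dots> = ((1 + \<epsilon>/2) / (\<epsilon>/2)) ^ card A"
    by (rule power_divide[symmetric])
  also have "(1 + \<epsilon>/2) / (\<epsilon>/2) = 1 + 2/\<epsilon>"
    using \<epsilon> by (simp add: field_simps)
  finally show ?thesis .
qed

text \<open>A maximal \<open>\<epsilon>\<close>-separated subset of the unit ball is an \<open>\<epsilon>\<close>-net.\<close>

lemma exists_net:
  assumes \<epsilon>: "\<epsilon> > 0"
  obtains N where "finite N" "\<And>g. g \<in> N \<Longrightarrow> p g \<le> 1" "real (card N) \<le> (1 + 2/\<epsilon>) ^ card A"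
    "\<And>f. p f \<le> 1 \<Longrightarrow> \<exists>g\<in>N. p (\<lambda>i. f i - g i) \<le> \<epsilon>"
proof -
  define P where "P S \<longleftrightarrow> S \<subseteq> unit_ball \<and> finite S \<and>
      (\<forall>y\<in>S. \<forall>z\<in>S. y \<noteq> z \<longrightarrow> p (\<lambda>i. y i - z i) > \<epsilon>)" for S
  have card_P: "real (card S) \<le> (1 + 2/\<epsilon>) ^ card A" if "P S" for S
    using that \<epsilon> by (intro card_separated_le) (auto simp: P_def)
  have "card S < nat \<lfloor>(1 + 2/\<epsilon>) ^ card A\<rfloor> + 1" if "P S" for S
    using card_P[OF that] by linarith
  moreover have "P {}" by (simp add: P_def)
  ultimately obtain S where S: "P S" and S_max: "\<And>S'. P S' \<Longrightarrow> card S' \<le> card S"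
    using ex_has_greatest_nat[of P "{}" card] by blast
  have "\<exists>g\<in>S. p (\<lambda>i. f i - g i) \<le> \<epsilon>" if f: "p f \<le> 1" for f
  proof (rule ccontr)
    assume not_covered: "\<not> (\<exists>g\<in>S. p (\<lambda>i. f i - g i) \<le> \<epsilon>)"
    define f' where "f' = restrict f A"
    have p_f': "p (\<lambda>i. f' i - g i) = p (\<lambda>i. f i - g i)" for g
      by (rule p_cong) (simp add: f'_def)
    have far: "\<epsilon> < p (\<lambda>i. f' i - g i)" "\<epsilon> < p (\<lambda>i. g i - f' i)" if "g \<in> S" for g
    proof -
      show "\<epsilon> < p (\<lambda>i. f' i - g i)"
        using not_covered that unfolding p_f' by (auto simp: not_le)
      then show "\<epsilon> < p (\<lambda>i. g i - f' i)"
        using p_diff_commute[of g f'] by linarith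
    qed
    have "f' \<notin> S"
    proof
      assume "f' \<in> S"
      from far(1)[OF this] show False using p_zero \<epsilon> by simp
    qed
    have "p f' = p f" by (rule p_cong) (simp add: f'_def)
    then have "f' \<in> unit_ball" using f by (simp add: unit_ball_def f'_def space_PiM)
    then have "P (insert f' S)"
      using S far by (auto simp: P_def)
    then have "card (insert f' S) \<le> card S" by (rule S_max)
    then show False using S \<open>f' \<notin> S\<close> by (simp add: P_def)
  qed
  then show ?thesis using S card_P by (intro that[of S]) (auto simp: P_def unit_ball_def)
qed

end

lemma closed_spec_norm_le:
  "closed {g :: nat \<times> nat \<Rightarrow> real. spec_norm m k (\<lambda>i j. g (i, j)) \<le> s}"
proof -
  have "{g :: nat \<times> nat \<Rightarrow> real. spec_norm m k (\<lambda>i j. g (i, j)) \<le> s} =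
     (\<Inter>x\<in>{x. L2_set x {..<k} \<le> 1}. {g. L2_set (\<lambda>i. \<Sum>j<k. g (i, j) * x j) {..<m} \<le> s})"
    by (auto intro: spec_norm_least dest: order.trans[OF spec_norm_upper])
  moreover have "continuous_on UNIV (\<lambda>g :: nat \<times> nat \<Rightarrow> real. L2_set (\<lambda>i. \<Sum>j<k. g (i, j) * x j) {..<m})"
    for x
    unfolding L2_set_def by (intro continuous_intros continuous_on_product_coordinates)
  ultimately show ?thesis
    by (simp add: closed_INT closed_Collect_le)
qed

lemma spec_norm_le_sets:
  "{f \<in> space (PiM ({..<m} \<times> {..<k}) (\<lambda>_. lborel)). spec_norm m k (\<lambda>i j. f (i, j)) \<le> s}
     \<in> sets (PiM ({..<m} \<times> {..<k}) (\<lambda>_. lborel :: real measure))"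
proof -
  define A where "A = {..<m} \<times> {..<k}"
  define E where "E f = (\<lambda>x. if x \<in> A then f x else 0 :: real)" for f :: "nat \<times> nat \<Rightarrow> real"
  have "E \<in> measurable (PiM A (\<lambda>_. lborel)) (PiM UNIV (\<lambda>_. borel))"
    unfolding E_def
  proof (rule measurable_PiM_single')
    fix x :: "nat \<times> nat"
    show "(\<lambda>f. if x \<in> A then f x else 0) \<in> borel_measurable (PiM A (\<lambda>_. lborel))"
      using measurable_component_singleton[of x A "\<lambda>_. lborel"]
      by (cases "x \<in> A") (simp_all add: measurable_lborel1)
  qed auto
  moreover have "{g. spec_norm m k (\<lambda>i j. g (i, j)) \<le> s} \<in> sets (PiM UNIV (\<lambda>_. borel :: real measure))"
    unfolding sets_PiM_equal_borel by (rule borel_closed[OF closed_spec_norm_le])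
  ultimately have "E -` {g. spec_norm m k (\<lambda>i j. g (i, j)) \<le> s} \<inter> space (PiM A (\<lambda>_. lborel))
      \<in> sets (PiM A (\<lambda>_. lborel))"
    by (rule measurable_sets)
  moreover have "spec_norm m k (\<lambda>i j. E f (i, j)) = spec_norm m k (\<lambda>i j. f (i, j))" for f
    by (rule spec_norm_cong) (simp add: E_def A_def)
  ultimately show ?thesis by (simp add: A_def vimage_def Collect_conj_eq Int_commute)
qed

lemma coordinate_norm_spec_norm:
  "coordinate_norm ({..<m} \<times> {..<k}) (\<lambda>f. spec_norm m k (\<lambda>i j. f (i, j))) (1 / (real m * real k + 1))"
proof
  show "spec_norm m k (\<lambda>i j. f (i, j)) = spec_norm m k (\<lambda>i j. g (i, j))"
    if "\<And>i. i \<in> {..<m} \<times> {..<k} \<Longrightarrow> f i = g i" for f g :: "nat \<times> nat \<Rightarrow> real"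
    using that by (intro spec_norm_cong) auto
  show "\<bar>f x\<bar> \<le> 1" if "spec_norm m k (\<lambda>i j. f (i, j)) \<le> 1" "x \<in> {..<m} \<times> {..<k}" for f x
    using that abs_entry_le_spec_norm[of "fst x" m "snd x" k "\<lambda>i j. f (i, j)"] by auto
  show "spec_norm m k (\<lambda>i j. f (i, j)) \<le> 1"
    if f: "\<And>x. x \<in> {..<m} \<times> {..<k} \<Longrightarrow> \<bar>f x\<bar> \<le> 1 / (real m * real k + 1)" for f
  proof -
    define \<delta> where "\<delta> = 1 / (real m * real k + 1)"
    have "0 < real m * real k + 1" by (simp add: add_nonneg_pos)
    then have \<delta>: "0 < \<delta>" "\<delta> \<le> 1" "(real m * real k + 1) * \<delta> = 1"
      by (auto simp: \<delta>_def)
    have "(\<Sum>i<m. \<Sum>j<k. (f (i, j))\<^sup>2) \<le> (\<Sum>i<m. \<Sum>j<k. \<delta>\<^sup>2)"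
      using f by (intro sum_mono abs_le_square_iff[THEN iffD1]) (auto simp: \<delta>_def)
    also have "\<dots> = real m * real k * \<delta> * \<delta>" by (simp add: power2_eq_square)
    also have "\<dots> \<le> (real m * real k + 1) * \<delta> * \<delta>"
      using \<delta> by (intro mult_right_mono) auto
    also have "\<dots> = \<delta>" using \<delta>(3) by (metis mult_1)
    also have "\<dots> \<le> 1" by (rule \<delta>(2))
    finally have "sqrt (\<Sum>i<m. \<Sum>j<k. (f (i, j))\<^sup>2) \<le> 1" by simp
    then show ?thesis using spec_norm_le_frobenius[of m k "\<lambda>i j. f (i, j)"] by linarith
  qed
qed (auto simp: spec_norm_scale spec_norm_triangle spec_norm_le_sets add_nonneg_pos)

lemma spec_norm_net:
  assumes "\<epsilon> > 0"
  obtains N :: "(nat \<Rightarrow> nat \<Rightarrow> real) set" where "finite N" "\<And>W. W \<in> N \<Longrightarrow> spec_norm m k W \<le> 1"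
    "real (card N) \<le> (1 + 2/\<epsilon>) ^ (m * k)"
    "\<And>V. spec_norm m k V \<le> 1 \<Longrightarrow> \<exists>W\<in>N. spec_norm m k (\<lambda>i j. V i j - W i j) \<le> \<epsilon>"
proof -
  interpret coordinate_norm "{..<m} \<times> {..<k}" "\<lambda>f. spec_norm m k (\<lambda>i j. f (i, j))"
    "1 / (real m * real k + 1)"
    by (rule coordinate_norm_spec_norm)
  obtain N where N: "finite N" "\<And>g. g \<in> N \<Longrightarrow> spec_norm m k (\<lambda>i j. g (i, j)) \<le> 1"
    "real (card N) \<le> (1 + 2/\<epsilon>) ^ (m * k)"
    "\<And>f. spec_norm m k (\<lambda>i j. f (i, j)) \<le> 1 \<Longrightarrow> \<exists>g\<in>N. spec_norm m k (\<lambda>i j. f (i, j) - g (i, j)) \<le> \<epsilon>"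
    using exists_net[OF assms] by (auto simp: card_cartesian_product)
  show ?thesis
  proof (rule that[of "(\<lambda>g i j. g (i, j)) ` N"])
    show "real (card ((\<lambda>g i j. g (i, j)) ` N)) \<le> (1 + 2/\<epsilon>) ^ (m * k)"
      using card_image_le[OF N(1), of "\<lambda>g i j. g (i, j)"] N(3) by linarith
    show "\<exists>W\<in>(\<lambda>g i j. g (i, j)) ` N. spec_norm m k (\<lambda>i j. V i j - W i j) \<le> \<epsilon>"
      if "spec_norm m k V \<le> 1" for V
      using that N(4)[of "\<lambda>(i, j). V i j"] by auto
  qed (use N in auto)
qed

section \<open>Concentration of chi-square variables\<close>

lemma normal_density_mult_exp_sq:
  assumes a: "a < 1/2"
  shows "std_normal_density x * exp (a * x\<^sup>2) = (1 / sqrt (1 - 2*a)) * normal_density 0 (1 / sqrt (1 - 2*a)) x"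
proof -
  define s where "s = 1 / sqrt (1 - 2*a)"
  have p: "1 - 2*a > 0" using a by simp
  have s2: "s\<^sup>2 = 1 / (1 - 2*a)" using p by (simp add: s_def power_divide)
  have e: "-(x - 0)\<^sup>2 / (2 * s\<^sup>2) = -(x\<^sup>2 / 2) + a * x\<^sup>2"
    using p by (simp add: s2 field_simps)
  have c: "s * (1 / sqrt (2 * pi * s\<^sup>2)) = 1 / sqrt (2 * pi)"
  proof -
    have "s > 0" using p by (simp add: s_def)
    then have "sqrt (2 * pi * s\<^sup>2) = sqrt (2*pi) * s" by (simp add: real_sqrt_mult)
    then show ?thesis using \<open>s > 0\<close> by simp
  qed
  have "s * normal_density 0 s x = s * (1 / sqrt (2 * pi * s\<^sup>2)) * exp (-(x - 0)\<^sup>2 / (2 * s\<^sup>2))"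
    by (simp add: normal_density_def)
  also have "\<dots> = 1 / sqrt (2 * pi) * exp (-(x\<^sup>2 / 2) + a * x\<^sup>2)"
    by (simp only: c e)
  also have "\<dots> = 1 / sqrt (2 * pi) * exp (-(x\<^sup>2 / 2)) * exp (a * x\<^sup>2)"
    by (simp add: mult_exp_exp algebra_simps)
  also have "\<dots> = std_normal_density x * exp (a * x\<^sup>2)"
    by (simp add: std_normal_density_def)
  finally show ?thesis by (simp add: s_def)
qed

lemma (in prob_space) nn_integral_exp_sq_std_normal:
  assumes X: "distributed M lborel X std_normal_density" and a: "a < 1/2"
  shows "(\<integral>\<^sup>+x. ennreal (exp (a * (X x)\<^sup>2)) \<partial>M) = ennreal (1 / sqrt (1 - 2*a))"
proof -
  have p: "1 - 2*a > 0" using a by simp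
  have "(\<integral>\<^sup>+x. ennreal (exp (a * (X x)\<^sup>2)) \<partial>M) =
        (\<integral>\<^sup>+x. ennreal (std_normal_density x) * ennreal (exp (a * x\<^sup>2)) \<partial>lborel)"
    by (rule distributed_nn_integral[OF X, symmetric]) simp
  also have "\<dots> = (\<integral>\<^sup>+x. ennreal (1 / sqrt (1 - 2*a)) * ennreal (normal_density 0 (1 / sqrt (1 - 2*a)) x) \<partial>lborel)"
    using p by (intro nn_integral_cong) (simp add: ennreal_mult'[symmetric] normal_density_mult_exp_sq[OF a])
  also have "\<dots> = ennreal (1 / sqrt (1 - 2*a)) * (\<integral>\<^sup>+x. ennreal (normal_density 0 (1 / sqrt (1 - 2*a)) x) \<partial>lborel)"
    by (rule nn_integral_cmult) simp
  also have "(\<integral>\<^sup>+x. ennreal (normal_density 0 (1 / sqrt (1 - 2*a)) x) \<partial>lborel) = 1"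
  proof -
    have "(\<integral>\<^sup>+x. ennreal (normal_density 0 (1 / sqrt (1 - 2*a)) x) \<partial>lborel) =
          ennreal (integral\<^sup>L lborel (normal_density 0 (1 / sqrt (1 - 2*a))))"
      by (rule nn_integral_eq_integral) (use p in \<open>auto intro: integrable_normal_density\<close>)
    also have "\<dots> = 1" using integral_normal_density[of "1 / sqrt (1 - 2*a)" 0] p by simp
    finally show ?thesis .
  qed
  finally show ?thesis by simp
qed

lemma (in prob_space) nn_integral_exp_sum_sq:
  assumes ind: "indep_vars (\<lambda>_. borel) Z {..<n}"
    and Z: "\<And>k. k < n \<Longrightarrow> distributed M lborel (Z k) std_normal_density" and a: "a < 1/2"
  shows "(\<integral>\<^sup>+x. ennreal (exp (a * (\<Sum>k<n. (Z k x)\<^sup>2))) \<partial>M) = ennreal ((1 / sqrt (1 - 2*a)) ^ n)"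
proof -
  have "(\<integral>\<^sup>+x. ennreal (exp (a * (\<Sum>k<n. (Z k x)\<^sup>2))) \<partial>M) = (\<integral>\<^sup>+x. (\<Prod>k<n. ennreal (exp (a * (Z k x)\<^sup>2))) \<partial>M)"
    by (simp add: sum_distrib_left exp_sum prod_ennreal)
  also have "\<dots> = (\<Prod>k<n. \<integral>\<^sup>+x. ennreal (exp (a * (Z k x)\<^sup>2)) \<partial>M)"
    by (intro indep_vars_nn_integral indep_vars_compose2[OF ind]) auto
  also have "\<dots> = (\<Prod>k<n. ennreal (1 / sqrt (1 - 2*a)))"
    using Z a by (intro prod.cong refl nn_integral_exp_sq_std_normal) auto
  also have "\<dots> = ennreal ((1 / sqrt (1 - 2*a)) ^ n)"
    using ennreal_power[of "1 / sqrt (1 - 2*a)" n] a by simp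
  finally show ?thesis .
qed

lemma inverse_sqrt_power_eq_exp: "y > 0 \<Longrightarrow> (1 / sqrt y) ^ n = exp (- (real n / 2) * ln y)"
proof -
  assume y: "y > 0"
  have "1 / sqrt y = exp (- (1/2) * ln y)"
    using y by (simp add: exp_minus exp_ln ln_sqrt[symmetric] inverse_eq_divide)
  then have "(1 / sqrt y) ^ n = exp (- (1/2) * ln y) ^ n" by simp
  also have "\<dots> = exp (real n * (- (1/2) * ln y))" by (rule exp_of_nat_mult[symmetric])
  finally show ?thesis by simp
qed

lemma chi_square_upper_chernoff_estimate:
  assumes s: "0 \<le> s" "s \<le> 1"
  shows "exp (- (s/8) * (real n * (1 + s))) * (1 / sqrt (1 - 2 * (s/8))) ^ n \<le> exp (- real n * s\<^sup>2 / 16)"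
proof -
  have y: "1 - 2 * (s/8) > 0" using s by simp
  have l: "- (s/4) - 2 * (s/4)\<^sup>2 \<le> ln (1 - s/4)"
    using s by (intro ln_one_minus_pos_lower_bound) auto
  have eq: "1 - 2 * (s/8) = 1 - s/4" by simp
  have a1: "- (s/8) * (1 + s) = - s/8 - s\<^sup>2/8" by (simp add: power2_eq_square algebra_simps)
  have a2: "(s/4)\<^sup>2 = s\<^sup>2/16" by (simp add: power2_eq_square)
  have u: "- (s/8) * (1 + s) - (1/2) * ln (1 - s/4) \<le> - s\<^sup>2 / 16"
    unfolding a1 using l a2 by linarith
  have "exp (- (s/8) * (real n * (1 + s))) * (1 / sqrt (1 - 2 * (s/8))) ^ n
      = exp (- (s/8) * (real n * (1 + s))) * exp (- (real n / 2) * ln (1 - s/4))"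
    using y by (simp only: inverse_sqrt_power_eq_exp eq)
  also have "\<dots> = exp (- (s/8) * (real n * (1 + s)) + - (real n / 2) * ln (1 - s/4))"
    by (rule mult_exp_exp)
  also have "- (s/8) * (real n * (1 + s)) + - (real n / 2) * ln (1 - s/4) = real n * (- (s/8) * (1 + s) - (1/2) * ln (1 - s/4))"
    by (simp add: algebra_simps)
  also have "real n * (- (s/8) * (1 + s) - (1/2) * ln (1 - s/4)) \<le> real n * (- s\<^sup>2 / 16)"
    by (rule mult_left_mono[OF u]) simp
  finally show ?thesis by simp
qed

lemma chi_square_lower_chernoff_estimate:
  assumes s: "0 \<le> s" "s \<le> 1"
  shows "exp ((s/4) * (real n * (1 - s))) * (1 / sqrt (1 - 2 * (- (s/4)))) ^ n \<le> exp (- real n * s\<^sup>2 / 16)"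
proof -
  have y: "1 - 2 * (- (s/4)) > 0" using s by simp
  have l: "s/2 - (s/2)\<^sup>2 \<le> ln (1 + s/2)"
    using s by (intro ln_one_plus_pos_lower_bound) auto
  have eq: "1 - 2 * (- (s/4)) = 1 + s/2" by simp
  have a1: "(s/4) * (1 - s) = s/4 - s\<^sup>2/4" by (simp add: power2_eq_square field_simps)
  have a2: "(s/2)\<^sup>2 = s\<^sup>2/4" by (simp add: power2_eq_square)
  have a3: "0 \<le> s\<^sup>2" by simp
  have u: "(s/4) * (1 - s) - (1/2) * ln (1 + s/2) \<le> - s\<^sup>2 / 16"
    unfolding a1 using l a2 a3 by linarith
  have "exp ((s/4) * (real n * (1 - s))) * (1 / sqrt (1 - 2 * (- (s/4)))) ^ n
      = exp ((s/4) * (real n * (1 - s))) * exp (- (real n / 2) * ln (1 + s/2))"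
    using y by (simp only: inverse_sqrt_power_eq_exp eq)
  also have "\<dots> = exp ((s/4) * (real n * (1 - s)) + - (real n / 2) * ln (1 + s/2))"
    by (rule mult_exp_exp)
  also have "(s/4) * (real n * (1 - s)) + - (real n / 2) * ln (1 + s/2) = real n * ((s/4) * (1 - s) - (1/2) * ln (1 + s/2))"
    by (simp add: algebra_simps)
  also have "real n * ((s/4) * (1 - s) - (1/2) * ln (1 + s/2)) \<le> real n * (- s\<^sup>2 / 16)"
    by (rule mult_left_mono[OF u]) simp
  finally show ?thesis by simp
qed

lemma (in prob_space) chi_square_upper_tail:
  assumes ind: "indep_vars (\<lambda>_. borel) Z {..<n}"
    and Z: "\<And>k. k < n \<Longrightarrow> distributed M lborel (Z k) std_normal_density"
    and s: "0 < s" "s \<le> 1"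
  shows "prob {x \<in> space M. real n * (1 + s) \<le> (\<Sum>k<n. (Z k x)\<^sup>2)} \<le> exp (- real n * s\<^sup>2 / 16)"
proof -
  have [measurable]: "Z k \<in> borel_measurable M" if "k < n" for k
    using distributed_measurable[OF Z[OF that]] by (simp add: measurable_lborel1)
  have m: "(\<lambda>x. (\<Sum>k<n. (Z k x)\<^sup>2) * indicator (space M) x) \<in> borel_measurable M"
    by measurable
  have l: "s/8 > 0" using s by simp
  have "emeasure M {x \<in> space M. real n * (1 + s) \<le> (\<Sum>k<n. (Z k x)\<^sup>2)}
     \<le> ennreal (exp (- (s/8) * (real n * (1 + s)))) *
         (\<integral>\<^sup>+x. ennreal (exp ((s/8) * (\<Sum>k<n. (Z k x)\<^sup>2))) * indicator (space M) x \<partial>M)"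
    by (rule Chernoff_ineq_nn_integral_ge[OF l sets.top m])
  also have "(\<integral>\<^sup>+x. ennreal (exp ((s/8) * (\<Sum>k<n. (Z k x)\<^sup>2))) * indicator (space M) x \<partial>M)
       = (\<integral>\<^sup>+x. ennreal (exp ((s/8) * (\<Sum>k<n. (Z k x)\<^sup>2))) \<partial>M)"
    by (intro nn_integral_cong) (simp add: indicator_def)
  also have "\<dots> = ennreal ((1 / sqrt (1 - 2 * (s/8))) ^ n)"
    using s by (intro nn_integral_exp_sum_sq ind Z) auto
  also have "ennreal (exp (- (s/8) * (real n * (1 + s)))) * ennreal ((1 / sqrt (1 - 2 * (s/8))) ^ n)
      = ennreal (exp (- (s/8) * (real n * (1 + s))) * (1 / sqrt (1 - 2 * (s/8))) ^ n)"
    using s by (simp add: ennreal_mult)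
  finally have "emeasure M {x \<in> space M. real n * (1 + s) \<le> (\<Sum>k<n. (Z k x)\<^sup>2)}
      \<le> ennreal (exp (- (s/8) * (real n * (1 + s))) * (1 / sqrt (1 - 2 * (s/8))) ^ n)" .
  then have "prob {x \<in> space M. real n * (1 + s) \<le> (\<Sum>k<n. (Z k x)\<^sup>2)}
      \<le> exp (- (s/8) * (real n * (1 + s))) * (1 / sqrt (1 - 2 * (s/8))) ^ n"
    using s by (simp add: emeasure_eq_measure ennreal_le_iff)
  also have "\<dots> \<le> exp (- real n * s\<^sup>2 / 16)"
    using s by (intro chi_square_upper_chernoff_estimate) auto
  finally show ?thesis .
qed

lemma (in prob_space) chi_square_lower_tail:
  assumes ind: "indep_vars (\<lambda>_. borel) Z {..<n}"
    and Z: "\<And>k. k < n \<Longrightarrow> distributed M lborel (Z k) std_normal_density"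
    and s: "0 < s" "s \<le> 1"
  shows "prob {x \<in> space M. (\<Sum>k<n. (Z k x)\<^sup>2) \<le> real n * (1 - s)} \<le> exp (- real n * s\<^sup>2 / 16)"
proof -
  have [measurable]: "Z k \<in> borel_measurable M" if "k < n" for k
    using distributed_measurable[OF Z[OF that]] by (simp add: measurable_lborel1)
  have m: "(\<lambda>x. (\<Sum>k<n. (Z k x)\<^sup>2)) \<in> borel_measurable M"
    by measurable
  have l: "s/4 > 0" using s by simp
  have "emeasure M {x \<in> space M. (\<Sum>k<n. (Z k x)\<^sup>2) \<le> real n * (1 - s)}
     \<le> ennreal (exp ((s/4) * (real n * (1 - s)))) *
         (\<integral>\<^sup>+x. ennreal (exp (- (s/4) * (\<Sum>k<n. (Z k x)\<^sup>2))) * indicator (space M) x \<partial>M)"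
    by (rule Chernoff_ineq_nn_integral_le[OF l sets.top m])
  also have "(\<integral>\<^sup>+x. ennreal (exp (- (s/4) * (\<Sum>k<n. (Z k x)\<^sup>2))) * indicator (space M) x \<partial>M)
       = (\<integral>\<^sup>+x. ennreal (exp ((- (s/4)) * (\<Sum>k<n. (Z k x)\<^sup>2))) \<partial>M)"
    by (intro nn_integral_cong) (simp add: indicator_def)
  also have "\<dots> = ennreal ((1 / sqrt (1 - 2 * (- (s/4)))) ^ n)"
    using s by (intro nn_integral_exp_sum_sq ind Z) auto
  also have "ennreal (exp ((s/4) * (real n * (1 - s)))) * ennreal ((1 / sqrt (1 - 2 * (- (s/4)))) ^ n)
      = ennreal (exp ((s/4) * (real n * (1 - s))) * (1 / sqrt (1 - 2 * (- (s/4)))) ^ n)"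
    using s by (simp add: ennreal_mult)
  finally have "emeasure M {x \<in> space M. (\<Sum>k<n. (Z k x)\<^sup>2) \<le> real n * (1 - s)}
      \<le> ennreal (exp ((s/4) * (real n * (1 - s))) * (1 / sqrt (1 - 2 * (- (s/4)))) ^ n)" .
  then have "prob {x \<in> space M. (\<Sum>k<n. (Z k x)\<^sup>2) \<le> real n * (1 - s)}
      \<le> exp ((s/4) * (real n * (1 - s))) * (1 / sqrt (1 - 2 * (- (s/4)))) ^ n"
    using s by (simp add: emeasure_eq_measure ennreal_le_iff)
  also have "\<dots> \<le> exp (- real n * s\<^sup>2 / 16)"
    using s by (intro chi_square_lower_chernoff_estimate) auto
  finally show ?thesis .
qed

lemma (in prob_space) chi_square_deviation_tail:
  assumes ind: "indep_vars (\<lambda>_. borel) Z {..<n}"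
    and Z: "\<And>k. k < n \<Longrightarrow> distributed M lborel (Z k) std_normal_density"
    and s: "0 < s" "s \<le> 1"
  shows "prob {x \<in> space M. real n * s < \<bar>(\<Sum>k<n. (Z k x)\<^sup>2) - real n\<bar>} \<le> 2 * exp (- real n * s\<^sup>2 / 16)"
proof -
  have [measurable]: "Z k \<in> borel_measurable M" if "k < n" for k
    using distributed_measurable[OF Z[OF that]] by (simp add: measurable_lborel1)
  let ?up = "{x \<in> space M. real n * (1 + s) \<le> (\<Sum>k<n. (Z k x)\<^sup>2)}"
  let ?low = "{x \<in> space M. (\<Sum>k<n. (Z k x)\<^sup>2) \<le> real n * (1 - s)}"
  have "prob {x \<in> space M. real n * s < \<bar>(\<Sum>k<n. (Z k x)\<^sup>2) - real n\<bar>} \<le> prob (?up \<union> ?low)"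
    by (intro finite_measure_mono) (auto simp: abs_if algebra_simps split: if_splits)
  also have "\<dots> \<le> prob ?up + prob ?low"
    by (intro measure_Un_le) measurable
  also have "\<dots> \<le> exp (- real n * s\<^sup>2 / 16) + exp (- real n * s\<^sup>2 / 16)"
    by (intro add_mono chi_square_upper_tail chi_square_lower_tail ind Z s)
  finally show ?thesis by simp
qed

lemma (in prob_space) prob_compl_UN_ge:
  assumes "finite I" "\<And>i. i \<in> I \<Longrightarrow> A i \<in> events" "\<And>i. i \<in> I \<Longrightarrow> prob (A i) \<le> p"
  shows "prob (space M - (\<Union>i\<in>I. A i)) \<ge> 1 - real (card I) * p"
proof -
  have "prob (\<Union>i\<in>I. A i) \<le> (\<Sum>i\<in>I. prob (A i))"
    using assms by (intro finite_measure_subadditive_finite) auto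
  also have "\<dots> \<le> real (card I) * p"
    using assms(3) by (intro sum_bounded_above) auto
  finally have "prob (\<Union>i\<in>I. A i) \<le> real (card I) * p" .
  moreover have "prob (space M - (\<Union>i\<in>I. A i)) = 1 - prob (\<Union>i\<in>I. A i)"
    using assms by (intro prob_compl sets.finite_UN) auto
  ultimately show ?thesis by linarith
qed

lemma (in prob_space) distributed_weighted_sum_indep_normal:
  assumes "finite J" "J \<noteq> {}" "indep_vars (\<lambda>_. borel) X J"
    and "\<And>j. j \<in> J \<Longrightarrow> distributed M lborel (X j) (normal_density 0 (\<sigma> j))"
    and "\<And>j. j \<in> J \<Longrightarrow> 0 < \<sigma> j" "\<And>j. j \<in> J \<Longrightarrow> w j \<noteq> 0"
  shows "distributed M lborel (\<lambda>\<omega>. \<Sum>j\<in>J. w j * X j \<omega>) (normal_density 0 (sqrt (\<Sum>j\<in>J. (w j * \<sigma> j)\<^sup>2)))"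
proof -
  have "distributed M lborel (\<lambda>\<omega>. w j * X j \<omega>) (normal_density 0 (\<bar>w j\<bar> * \<sigma> j))" if "j \<in> J" for j
    using normal_density_affine[OF assms(4)[OF that] assms(5)[OF that] assms(6)[OF that], of 0]
    by simp
  moreover have "indep_vars (\<lambda>_. borel) (\<lambda>j \<omega>. w j * X j \<omega>) J"
    using assms(3) by (rule indep_vars_compose2[where Y = "\<lambda>j x. w j * x"]) simp
  ultimately have "distributed M lborel (\<lambda>\<omega>. \<Sum>j\<in>J. w j * X j \<omega>)
      (normal_density (\<Sum>j\<in>J. 0) (sqrt (\<Sum>j\<in>J. (\<bar>w j\<bar> * \<sigma> j)\<^sup>2)))"
    using assms by (intro sum_indep_normal) auto
  then show ?thesis by (simp add: power_mult_distrib)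
qed

section \<open>Linear statistics of GOE samples\<close>

definition upper_pairs :: "nat \<Rightarrow> (nat \<times> nat) set" where "upper_pairs d = {(i, j). i \<le> j \<and> j < d}"

lemma upper_pairs_Suc: "upper_pairs (Suc d) = upper_pairs d \<union> (\<lambda>i. (i, d)) ` {..d}"
  by (auto simp: upper_pairs_def less_Suc_eq)

lemma finite_upper_pairs[simp]: "finite (upper_pairs d)"
  by (rule finite_subset[of _ "{..<d} \<times> {..<d}"]) (auto simp: upper_pairs_def)

lemma double_sum_eq_sum_upper_pairs:
  "(\<Sum>i<d. \<Sum>j<d. g i j) = (\<Sum>(i, j)\<in>upper_pairs d. if i = j then g i i else g i j + g j i)"
proof (induction d)
  case 0 then show ?case by (simp add: upper_pairs_def)
next
  case (Suc d)
  have disj: "upper_pairs d \<inter> (\<lambda>i. (i, d)) ` {..d} = {}" by (auto simp: upper_pairs_def)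
  let ?F = "\<lambda>(i, j). if i = j then g i i else g i j + g j i"
  have square_Suc: "(\<Sum>i<Suc d. \<Sum>j<Suc d. g i j) = (\<Sum>i<d. \<Sum>j<d. g i j) + ((\<Sum>i<d. g i d + g d i) + g d d)"
    by (simp add: sum.distrib algebra_simps)
  have border: "(\<Sum>i<d. g i d + g d i) + g d d = (\<Sum>i\<in>{..d}. if i = d then g d d else g i d + g d i)"
    by (simp add: lessThan_Suc_atMost[symmetric] add.commute)
  have border_reindex: "(\<Sum>i\<in>{..d}. if i = d then g d d else g i d + g d i) = sum ?F ((\<lambda>i. (i, d)) ` {..d})"
    by (subst sum.reindex) (auto simp: inj_on_def intro!: sum.cong)
  have upper_pairs_split: "sum ?F (upper_pairs (Suc d)) = sum ?F (upper_pairs d) + sum ?F ((\<lambda>i. (i, d)) ` {..d})"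
    unfolding upper_pairs_Suc by (rule sum.union_disjoint) (use disj in auto)
  show ?case using square_Suc border border_reindex upper_pairs_split Suc.IH by simp
qed

definition goe_sd :: "nat \<Rightarrow> nat \<Rightarrow> real" where "goe_sd i j = (if i = j then 1 else sqrt (1/2))"
definition sym_coeff :: "(nat \<Rightarrow> nat \<Rightarrow> real) \<Rightarrow> nat \<Rightarrow> nat \<Rightarrow> real" where
  "sym_coeff C i j = (if i = j then C i i else C i j + C j i)"
definition goe_inner :: "nat \<Rightarrow> (nat \<times> nat \<times> nat \<Rightarrow> real) \<Rightarrow> nat \<Rightarrow> (nat \<Rightarrow> nat \<Rightarrow> real) \<Rightarrow> real" where
  "goe_inner d \<omega> k C = (\<Sum>(i, j)\<in>upper_pairs d. sym_coeff C i j * \<omega> (k, i, j))"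
definition goe_variance :: "nat \<Rightarrow> (nat \<Rightarrow> nat \<Rightarrow> real) \<Rightarrow> real" where
  "goe_variance d C = (\<Sum>(i, j)\<in>upper_pairs d. (sym_coeff C i j * goe_sd i j)\<^sup>2)"
definition goe_deviation :: "nat \<Rightarrow> nat \<Rightarrow> (nat \<Rightarrow> nat \<Rightarrow> real) \<Rightarrow> (nat \<times> nat \<times> nat \<Rightarrow> real) \<Rightarrow> real"
  where "goe_deviation n d C \<omega> = (\<Sum>k<n. (goe_inner d \<omega> k C)\<^sup>2) / real n - goe_variance d C"

lemma goe_sd_pos: "goe_sd i j > 0" by (simp add: goe_sd_def)
lemma goe_sd_sq: "(goe_sd i j)\<^sup>2 = (if i = j then 1 else 1/2)" by (simp add: goe_sd_def)

lemma frob_goe_mat: "frob d (goe_mat \<omega> k) C = goe_inner d \<omega> k C"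
proof -
  have "frob d (goe_mat \<omega> k) C = (\<Sum>i<d. \<Sum>j<d. \<omega> (k, min i j, max i j) * C i j)"
    by (simp add: frob_def goe_mat_def)
  also have "\<dots> = (\<Sum>(i, j)\<in>upper_pairs d. if i = j then \<omega> (k, min i i, max i i) * C i i
        else \<omega> (k, min i j, max i j) * C i j + \<omega> (k, min j i, max j i) * C j i)"
    by (rule double_sum_eq_sum_upper_pairs)
  also have "\<dots> = goe_inner d \<omega> k C"
    unfolding goe_inner_def by (intro sum.cong refl) (auto simp: upper_pairs_def sym_coeff_def algebra_simps min_def max_def)
  finally show ?thesis .
qed

lemma frob_sym_eq_sum_upper_pairs:
  assumes sym: "\<And>i j. i < d \<Longrightarrow> j < d \<Longrightarrow> A i j = A j i"
  shows "frob d A B = (\<Sum>(i, j)\<in>upper_pairs d. sym_coeff A i j * sym_coeff B i j * (goe_sd i j)\<^sup>2)"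
proof -
  have "frob d A B = (\<Sum>(i, j)\<in>upper_pairs d. if i = j then A i i * B i i else A i j * B i j + A j i * B j i)"
    unfolding frob_def by (rule double_sum_eq_sum_upper_pairs)
  also have "\<dots> = (\<Sum>(i, j)\<in>upper_pairs d. sym_coeff A i j * sym_coeff B i j * (goe_sd i j)\<^sup>2)"
  proof (intro sum.cong refl, clarify)
    fix i j assume "(i, j) \<in> upper_pairs d"
    then have ij: "i \<le> j" "j < d" by (auto simp: upper_pairs_def)
    show "(if i = j then A i i * B i i else A i j * B i j + A j i * B j i) = sym_coeff A i j * sym_coeff B i j * (goe_sd i j)\<^sup>2"
      using sym[of i j] ij by (auto simp: sym_coeff_def goe_sd_sq algebra_simps)
  qed
  finally show ?thesis .
qed

lemma sym_coeff_linear: "sym_coeff (\<lambda>i j. a * A i j + b * B i j) i j = a * sym_coeff A i j + b * sym_coeff B i j"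
  by (simp add: sym_coeff_def algebra_simps)

lemma goe_inner_linear: "goe_inner d \<omega> k (\<lambda>i j. a * A i j + b * B i j) = a * goe_inner d \<omega> k A + b * goe_inner d \<omega> k B"
  by (simp add: goe_inner_def sym_coeff_linear case_prod_beta algebra_simps sum.distrib sum_distrib_left)

lemma goe_variance_nonneg: "0 \<le> goe_variance d C"
  by (simp add: goe_variance_def case_prod_beta sum_nonneg)

lemma sym_coeff_eq_0_if_goe_variance_eq_0:
  assumes "goe_variance d C = 0" "(i, j) \<in> upper_pairs d"
  shows "sym_coeff C i j = 0"
proof -
  have "\<forall>x\<in>upper_pairs d. (case x of (i, j) \<Rightarrow> (sym_coeff C i j * goe_sd i j)\<^sup>2) = 0"
    using assms(1) by (subst sum_nonneg_eq_0_iff[symmetric]) (auto simp: goe_variance_def)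
  then have "(sym_coeff C i j * goe_sd i j)\<^sup>2 = 0" using assms(2) by fastforce
  then show ?thesis using goe_sd_pos[of i j] by simp
qed

lemma goe_variance_polarization:
  assumes s: "s \<noteq> 0"
  shows "goe_variance d (\<lambda>i j. (1/s) * A i j + s * B i j) - goe_variance d (\<lambda>i j. (1/s) * A i j + (- s) * B i j)
     = 4 * (\<Sum>(i, j)\<in>upper_pairs d. sym_coeff A i j * sym_coeff B i j * (goe_sd i j)\<^sup>2)"
  unfolding goe_variance_def sym_coeff_linear
  by (simp add: case_prod_beta sum_subtractf[symmetric] sum_distrib_left power2_eq_square algebra_simps s)

lemma goe_inner_polarization:
  assumes s: "s \<noteq> 0"
  shows "goe_inner d \<omega> k A * goe_inner d \<omega> k B = ((goe_inner d \<omega> k (\<lambda>i j. (1/s) * A i j + s * B i j))\<^sup>2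
          - (goe_inner d \<omega> k (\<lambda>i j. (1/s) * A i j + (- s) * B i j))\<^sup>2) / 4"
  unfolding goe_inner_linear using s by (simp add: power2_eq_square algebra_simps)

lemma goe_variance_le_frobenius: "goe_variance d C \<le> (\<Sum>i<d. \<Sum>j<d. (C i j)\<^sup>2)"
proof -
  have "goe_variance d C \<le> (\<Sum>(i, j)\<in>upper_pairs d. if i = j then (C i i)\<^sup>2 else (C i j)\<^sup>2 + (C j i)\<^sup>2)"
    unfolding goe_variance_def
  proof (intro sum_mono, clarify)
    fix i j
    have "(C i j + C j i)\<^sup>2 / 2 \<le> (C i j)\<^sup>2 + (C j i)\<^sup>2"
      using sum_squares_ge_zero[of "C i j - C j i" 0] by (simp add: power2_eq_square algebra_simps)
    then show "(sym_coeff C i j * goe_sd i j)\<^sup>2 \<le> (if i = j then (C i i)\<^sup>2 else (C i j)\<^sup>2 + (C j i)\<^sup>2)"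
      by (auto simp: sym_coeff_def power_mult_distrib goe_sd_sq)
  qed
  also have "\<dots> = (\<Sum>i<d. \<Sum>j<d. (C i j)\<^sup>2)" by (rule double_sum_eq_sum_upper_pairs[symmetric])
  finally show ?thesis .
qed

lemma goe_variance_add_le:
  assumes s: "s > 0"
  shows "goe_variance d (\<lambda>i j. (1/s) * A i j + c * B i j) \<le> 2 * goe_variance d A / s\<^sup>2 + 2 * c\<^sup>2 * goe_variance d B"
proof -
  have "goe_variance d (\<lambda>i j. (1/s) * A i j + c * B i j) =
      (\<Sum>(i, j)\<in>upper_pairs d. ((1/s) * sym_coeff A i j * goe_sd i j + c * sym_coeff B i j * goe_sd i j)\<^sup>2)"
    unfolding goe_variance_def sym_coeff_linear by (simp add: algebra_simps)
  also have "\<dots> \<le> (\<Sum>(i, j)\<in>upper_pairs d.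
      2 * ((1/s) * sym_coeff A i j * goe_sd i j)\<^sup>2 + 2 * (c * sym_coeff B i j * goe_sd i j)\<^sup>2)"
    by (intro sum_mono) (simp add: case_prod_beta power2_sum_le)
  also have "\<dots> = 2 * goe_variance d A / s\<^sup>2 + 2 * c\<^sup>2 * goe_variance d B"
    unfolding goe_variance_def
    by (simp add: case_prod_beta sum.distrib sum_distrib_left sum_divide_distrib power_mult_distrib power_divide algebra_simps)
  finally show ?thesis .
qed

lemma upper_pairs_in_goe_index: "k < n \<Longrightarrow> (i, j) \<in> upper_pairs d \<Longrightarrow> (k, i, j) \<in> goe_index n d"
  by (auto simp: upper_pairs_def goe_index_def)

lemma indep_vars_PiM_coordinates:
  assumes M: "\<And>i. i \<in> I \<Longrightarrow> prob_space (M i)" and ne: "I \<noteq> {}"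
  shows "prob_space.indep_vars (PiM I M) M (\<lambda>i \<omega>. \<omega> i) I"
proof -
  interpret prob_space "PiM I M" by (rule prob_space_PiM[OF M])
  have rv: "\<And>i. i \<in> I \<Longrightarrow> random_variable (M i) (\<lambda>\<omega>. \<omega> i)"
    by (rule measurable_component_singleton)
  have "distr (PiM I M) (PiM I M) (\<lambda>x. \<lambda>i\<in>I. x i) = distr (PiM I M) (PiM I M) (\<lambda>x. x)"
    by (intro distr_cong refl) (auto simp: space_PiM PiE_def extensional_def restrict_def fun_eq_iff)
  also have "\<dots> = PiM I M" by simp
  also have "\<dots> = PiM I (\<lambda>i. distr (PiM I M) (M i) (\<lambda>x. x i))"
    by (intro PiM_cong refl distr_PiM_component[symmetric] M) auto
  finally show ?thesis
    by (subst indep_vars_iff_distr_eq_PiM'[OF ne rv]) auto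
qed

definition goe_entry_law :: "nat \<times> nat \<times> nat \<Rightarrow> real measure" where
  "goe_entry_law \<alpha> = density lborel (normal_density 0 (goe_sd (fst (snd \<alpha>)) (snd (snd \<alpha>))))"

lemma goe_sample_space_eq_PiM: "goe_sample_space n d = PiM (goe_index n d) goe_entry_law"
  unfolding goe_sample_space_def goe_entry_law_def goe_sd_def
  by (intro PiM_cong refl) (auto split: prod.split)

lemma prob_space_goe_entry_law: "prob_space (goe_entry_law \<alpha>)"
  unfolding goe_entry_law_def by (rule prob_space_normal_density) (rule goe_sd_pos)

lemma prob_space_goe_sample_space: "prob_space (goe_sample_space n d)"
  unfolding goe_sample_space_eq_PiM by (rule prob_space_PiM) (rule prob_space_goe_entry_law)

lemma goe_index_nonempty: "n \<ge> 1 \<Longrightarrow> d \<ge> 1 \<Longrightarrow> goe_index n d \<noteq> {}"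
  unfolding goe_index_def by (rule ex_in_conv[THEN iffD1], rule exI[of _ "(0, 0, 0)"]) auto

lemma indep_goe_entries:
  assumes "n \<ge> 1" "d \<ge> 1"
  shows "prob_space.indep_vars (goe_sample_space n d) goe_entry_law (\<lambda>\<alpha> \<omega>. \<omega> \<alpha>) (goe_index n d)"
  unfolding goe_sample_space_eq_PiM by (rule indep_vars_PiM_coordinates[OF prob_space_goe_entry_law goe_index_nonempty[OF assms]])

lemma distributed_goe_entry:
  assumes "\<alpha> \<in> goe_index n d"
  shows "distributed (goe_sample_space n d) lborel (\<lambda>\<omega>. \<omega> \<alpha>) (normal_density 0 (goe_sd (fst (snd \<alpha>)) (snd (snd \<alpha>))))"
proof -
  have m: "(\<lambda>\<omega>. \<omega> \<alpha>) \<in> measurable (goe_sample_space n d) (goe_entry_law \<alpha>)"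
    unfolding goe_sample_space_eq_PiM by (rule measurable_component_singleton[OF assms])
  have "distr (goe_sample_space n d) lborel (\<lambda>\<omega>. \<omega> \<alpha>) = distr (goe_sample_space n d) (goe_entry_law \<alpha>) (\<lambda>\<omega>. \<omega> \<alpha>)"
    by (intro distr_cong refl) (simp add: goe_entry_law_def)
  also have "\<dots> = goe_entry_law \<alpha>"
    unfolding goe_sample_space_eq_PiM by (rule distr_PiM_component[OF prob_space_goe_entry_law assms])
  finally show ?thesis
    unfolding distributed_def using m by (auto simp: goe_entry_law_def measurable_lborel1 cong: measurable_cong_sets)
qed

lemma goe_inner_measurable: "k < n \<Longrightarrow> (\<lambda>\<omega>. goe_inner d \<omega> k C) \<in> borel_measurable (goe_sample_space n d)"
proof -
  assume k: "k < n"
  have "(\<lambda>\<omega>. \<omega> (k, i, j)) \<in> borel_measurable (goe_sample_space n d)" if "(i, j) \<in> upper_pairs d" for i j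
  proof -
    have "(\<lambda>\<omega>. \<omega> (k, i, j)) \<in> measurable (goe_sample_space n d) (goe_entry_law (k, i, j))"
      unfolding goe_sample_space_eq_PiM by (rule measurable_component_singleton[OF upper_pairs_in_goe_index[OF k that]])
    then show ?thesis by (simp add: goe_entry_law_def measurable_lborel1 cong: measurable_cong_sets)
  qed
  then show ?thesis unfolding goe_inner_def
    by (intro borel_measurable_sum) (auto intro!: borel_measurable_times)
qed

lemma goe_deviation_measurable: "goe_deviation n d C \<in> borel_measurable (goe_sample_space n d)"
  unfolding goe_deviation_def using goe_inner_measurable by measurable

context
  fixes n d :: nat and C :: "nat \<Rightarrow> nat \<Rightarrow> real"
  assumes n: "n \<ge> 1" and d: "d \<ge> 1"
begin

interpretation P: prob_space "goe_sample_space n d" by (rule prob_space_goe_sample_space)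

lemma distributed_goe_inner:
  assumes k: "k < n" and var: "goe_variance d C > 0"
  shows "distributed (goe_sample_space n d) lborel (\<lambda>\<omega>. goe_inner d \<omega> k C) (normal_density 0 (sqrt (goe_variance d C)))"
proof -
  define supp where "supp = {p \<in> upper_pairs d. sym_coeff C (fst p) (snd p) \<noteq> 0}"
  define J where "J = (\<lambda>(i, j). (k, i, j)) ` supp"
  define w where "w \<beta> = sym_coeff C (fst (snd \<beta>)) (snd (snd \<beta>))" for \<beta> :: "nat \<times> nat \<times> nat"
  have J: "finite J" "J \<subseteq> goe_index n d"
    using k by (auto simp: J_def supp_def intro: upper_pairs_in_goe_index finite_subset[of _ "upper_pairs d"])
  have sum_J: "(\<Sum>\<beta>\<in>J. f \<beta>) = (\<Sum>(i, j)\<in>upper_pairs d. f (k, i, j))"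
    if "\<And>i j. sym_coeff C i j = 0 \<Longrightarrow> f (k, i, j) = 0" for f :: "nat \<times> nat \<times> nat \<Rightarrow> real"
  proof -
    have "(\<Sum>\<beta>\<in>J. f \<beta>) = (\<Sum>(i, j)\<in>supp. f (k, i, j))"
      unfolding J_def by (subst sum.reindex) (auto simp: inj_on_def case_prod_beta)
    also have "\<dots> = (\<Sum>(i, j)\<in>upper_pairs d. f (k, i, j))"
      using that by (intro sum.mono_neutral_left) (auto simp: supp_def)
    finally show ?thesis .
  qed
  have variance: "(\<Sum>\<beta>\<in>J. (w \<beta> * goe_sd (fst (snd \<beta>)) (snd (snd \<beta>)))\<^sup>2) = goe_variance d C"
    by (subst sum_J) (auto simp: w_def goe_variance_def)
  then have "J \<noteq> {}" using var by auto
  moreover have "P.indep_vars (\<lambda>_. borel) (\<lambda>\<beta> \<omega>. \<omega> \<beta>) J"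
    using P.indep_vars_subset[OF indep_goe_entries[OF n d] J(2)]
    by (rule P.indep_vars_compose2[where X = "\<lambda>\<beta> \<omega>. \<omega> \<beta>" and Y = "\<lambda>_ x. x", simplified])
      (simp add: goe_entry_law_def measurable_lborel1 cong: measurable_cong_sets)
  moreover have "w \<beta> \<noteq> 0" if "\<beta> \<in> J" for \<beta> using that by (auto simp: J_def supp_def w_def)
  ultimately have "distributed (goe_sample_space n d) lborel (\<lambda>\<omega>. \<Sum>\<beta>\<in>J. w \<beta> * \<omega> \<beta>)
      (normal_density 0 (sqrt (\<Sum>\<beta>\<in>J. (w \<beta> * goe_sd (fst (snd \<beta>)) (snd (snd \<beta>)))\<^sup>2)))"
    using J by (intro P.distributed_weighted_sum_indep_normal distributed_goe_entry goe_sd_pos) auto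
  moreover have "(\<lambda>\<omega>. \<Sum>\<beta>\<in>J. w \<beta> * \<omega> \<beta>) = (\<lambda>\<omega>. goe_inner d \<omega> k C)"
    by (rule ext, subst sum_J) (auto simp: w_def goe_inner_def)
  ultimately show ?thesis by (simp only: variance)
qed

lemma distributed_goe_inner_normalized:
  assumes k: "k < n" and tpos: "goe_variance d C > 0"
  shows "distributed (goe_sample_space n d) lborel (\<lambda>\<omega>. goe_inner d \<omega> k C / sqrt (goe_variance d C)) std_normal_density"
proof -
  have "distributed (goe_sample_space n d) lborel (\<lambda>\<omega>. (goe_inner d \<omega> k C - 0) / sqrt (goe_variance d C)) std_normal_density"
    using distributed_goe_inner[OF k tpos] P.normal_standard_normal_convert[of "sqrt (goe_variance d C)"] tpos by simp
  then show ?thesis by simp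
qed

lemma indep_goe_inner:
  "P.indep_vars (\<lambda>_. borel) (\<lambda>k \<omega>. goe_inner d \<omega> k C / c) {..<n}"
proof -
  define K where "K k = {\<beta> \<in> goe_index n d. fst \<beta> = k}" for k
  have r: "P.indep_vars (\<lambda>k. PiM (K k) goe_entry_law) (\<lambda>k \<omega>. restrict (\<lambda>\<alpha>. \<omega> \<alpha>) (K k)) {..<n}"
    by (rule P.indep_vars_restrict[OF indep_goe_entries[OF n d]])
       (auto simp: K_def disjoint_family_on_def)
  have m: "(\<lambda>f. goe_inner d f k C / c) \<in> measurable (PiM (K k) goe_entry_law) borel" if k: "k \<in> {..<n}" for k
  proof -
    have "(\<lambda>f. f (k, i, j)) \<in> borel_measurable (PiM (K k) goe_entry_law)" if "(i, j) \<in> upper_pairs d" for i j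
    proof -
      have "(k, i, j) \<in> K k" using k that by (auto simp: K_def intro: upper_pairs_in_goe_index)
      then have "(\<lambda>f. f (k, i, j)) \<in> measurable (PiM (K k) goe_entry_law) (goe_entry_law (k, i, j))"
        by (rule measurable_component_singleton)
      then show ?thesis by (simp add: goe_entry_law_def measurable_lborel1 cong: measurable_cong_sets)
    qed
    then show ?thesis unfolding goe_inner_def
      by (intro borel_measurable_divide borel_measurable_sum) (auto intro!: borel_measurable_times)
  qed
  have "P.indep_vars (\<lambda>_. borel) (\<lambda>k \<omega>. goe_inner d (restrict (\<lambda>\<alpha>. \<omega> \<alpha>) (K k)) k C / c) {..<n}"
    by (rule P.indep_vars_compose2[OF r m])
  moreover have "goe_inner d (restrict (\<lambda>\<alpha>. \<omega> \<alpha>) (K k)) k C = goe_inner d \<omega> k C" if "k \<in> {..<n}" for k \<omega>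
    unfolding goe_inner_def using that by (intro sum.cong refl) (auto simp: K_def intro: upper_pairs_in_goe_index)
  ultimately show ?thesis
    by (subst P.indep_vars_cong[where Y="\<lambda>k \<omega>. goe_inner d (restrict (\<lambda>\<alpha>. \<omega> \<alpha>) (K k)) k C / c" and N'="\<lambda>_. borel"]) auto
qed

text \<open>Each \<open>goe_inner d \<omega> k C / sqrt (goe_variance d C)\<close> is standard normal, so
  \<open>n * (1 + goe_deviation n d C \<omega> / goe_variance d C)\<close> is chi-square with \<open>n\<close> degrees of freedom.\<close>

lemma goe_deviation_relative_tail:
  assumes T: "0 < goe_variance d C" and s: "0 < s" "s \<le> 1"
  shows "P.prob {\<omega> \<in> space (goe_sample_space n d). s * goe_variance d C < \<bar>goe_deviation n d C \<omega>\<bar>}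
          \<le> 2 * exp (- real n * s\<^sup>2 / 16)"
proof -
  define T where "T = goe_variance d C"
  define Z where "Z k \<omega> = goe_inner d \<omega> k C / sqrt T" for k \<omega>
  have [measurable]: "Z k \<in> borel_measurable (goe_sample_space n d)" if "k < n" for k
    unfolding Z_def using goe_inner_measurable[OF that] by measurable
  have "{\<omega> \<in> space (goe_sample_space n d). s * T < \<bar>goe_deviation n d C \<omega>\<bar>} \<subseteq>
      {\<omega> \<in> space (goe_sample_space n d). real n * s < \<bar>(\<Sum>k<n. (Z k \<omega>)\<^sup>2) - real n\<bar>}"
  proof safe
    fix \<omega> define S where "S = (\<Sum>k<n. (goe_inner d \<omega> k C)\<^sup>2)"
    assume "s * T < \<bar>goe_deviation n d C \<omega>\<bar>"
    then have "s * T < \<bar>S / real n - T\<bar>" by (simp add: S_def T_def goe_deviation_def)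
    moreover have "0 < real n / T" using n T by (simp add: T_def)
    ultimately have "real n / T * (s * T) < real n / T * \<bar>S / real n - T\<bar>"
      by (rule mult_strict_left_mono)
    also have "\<dots> = \<bar>real n / T * (S / real n - T)\<bar>"
      using \<open>0 < real n / T\<close> by (simp only: abs_mult abs_of_pos)
    also have "real n / T * (S / real n - T) = S / T - real n"
      using n T by (simp add: T_def field_simps)
    also have "S / T = (\<Sum>k<n. (Z k \<omega>)\<^sup>2)"
      using T by (simp add: S_def Z_def T_def power_divide sum_divide_distrib)
    finally show "real n * s < \<bar>(\<Sum>k<n. (Z k \<omega>)\<^sup>2) - real n\<bar>"
      using T by (simp add: T_def)
  qed
  then have "P.prob {\<omega> \<in> space (goe_sample_space n d). s * T < \<bar>goe_deviation n d C \<omega>\<bar>} \<le>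
      P.prob {\<omega> \<in> space (goe_sample_space n d). real n * s < \<bar>(\<Sum>k<n. (Z k \<omega>)\<^sup>2) - real n\<bar>}"
    by (intro P.finite_measure_mono) measurable
  also have "\<dots> \<le> 2 * exp (- real n * s\<^sup>2 / 16)"
    unfolding Z_def T_def
    using T s by (intro P.chi_square_deviation_tail indep_goe_inner distributed_goe_inner_normalized) auto
  finally show ?thesis by (simp add: T_def)
qed

lemma goe_deviation_tail:
  assumes t: "0 \<le> t" "t \<le> 1" and Q: "goe_variance d C \<le> Q"
  shows "P.prob {\<omega> \<in> space (goe_sample_space n d). t * Q < \<bar>goe_deviation n d C \<omega>\<bar>}
          \<le> 2 * exp (- real n * t\<^sup>2 / 16)"
    (is "P.prob ?E \<le> _")
proof -
  define T where "T = goe_variance d C"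
  have T: "0 \<le> T" "T \<le> Q" using Q by (auto simp: T_def goe_variance_nonneg)
  consider "t = 0" | "T = 0" | "0 < t" "0 < T" using t T by fastforce
  then show ?thesis
  proof cases
    case 1
    have "P.prob ?E \<le> 1" by (rule P.prob_le_1)
    moreover have "2 * exp (- real n * t\<^sup>2 / 16) = 2" using 1 by simp
    ultimately show ?thesis by linarith
  next
    case 2
    then have "goe_inner d \<omega> k C = 0" for \<omega> k
      unfolding goe_inner_def T_def using sym_coeff_eq_0_if_goe_variance_eq_0 by (auto intro!: sum.neutral)
    then have "?E = {}" using 2 T t by (auto simp: T_def not_less goe_deviation_def)
    then have "P.prob ?E = 0" by (simp only: measure_empty)
    then show ?thesis by simp
  next
    case 3
    define s where "s = min 1 (t * Q / T)"
    have "t * T \<le> t * Q" using T 3 by (intro mult_left_mono) auto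
    then have s: "0 < s" "s \<le> 1" "t \<le> s"
      using 3 t by (auto simp: s_def le_divide_eq)
    have "s \<le> t * Q / T" by (simp add: s_def)
    then have "s * T \<le> t * Q" using 3 by (simp add: le_divide_eq)
    then have "P.prob ?E \<le> P.prob {\<omega> \<in> space (goe_sample_space n d). s * T < \<bar>goe_deviation n d C \<omega>\<bar>}"
      using goe_deviation_measurable[of n d C] by (intro P.finite_measure_mono) auto
    also have "\<dots> \<le> 2 * exp (- real n * s\<^sup>2 / 16)"
      unfolding T_def using 3 s by (intro goe_deviation_relative_tail) (auto simp: T_def)
    also have "\<dots> \<le> 2 * exp (- real n * t\<^sup>2 / 16)"
      using s t by (simp add: mult_left_mono power_mono)
    finally show ?thesis .
  qed
qed

end

section \<open>The bilinear form of the deviation operator\<close>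

definition sym_outer :: "nat \<Rightarrow> (nat \<Rightarrow> nat \<Rightarrow> real) \<Rightarrow> (nat \<Rightarrow> nat \<Rightarrow> real) \<Rightarrow> nat \<Rightarrow> nat \<Rightarrow> real"
  where "sym_outer r V W = (\<lambda>i j. (\<Sum>l<r. V i l * W j l) + (\<Sum>l<r. W i l * V j l))"

definition col_outer :: "(nat \<Rightarrow> nat \<Rightarrow> real) \<Rightarrow> (nat \<Rightarrow> nat \<Rightarrow> real) \<Rightarrow> nat \<Rightarrow> nat \<Rightarrow> real"
  where "col_outer U U' = (\<lambda>i j. U i 0 * U' j 0)"

text \<open>Vectors are \<open>d \<times> 1\<close> matrices: \<open>dev_form n d r X V W U U'\<close> is \<open>u\<^sup>T (\<X>\<^sup>*\<X> - \<I>)(V W\<^sup>T + W V\<^sup>T) u'\<close>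
  with \<open>u\<close>, \<open>u'\<close> the columns of \<open>U\<close>, \<open>U'\<close>.\<close>

definition dev_form :: "nat \<Rightarrow> nat \<Rightarrow> nat \<Rightarrow> (nat \<Rightarrow> nat \<Rightarrow> nat \<Rightarrow> real) \<Rightarrow> (nat \<Rightarrow> nat \<Rightarrow> real)
    \<Rightarrow> (nat \<Rightarrow> nat \<Rightarrow> real) \<Rightarrow> (nat \<Rightarrow> nat \<Rightarrow> real) \<Rightarrow> (nat \<Rightarrow> nat \<Rightarrow> real) \<Rightarrow> real"
  where "dev_form n d r X V W U U' =
    (\<Sum>i<d. \<Sum>j<d. U i 0 * XsX_minus_I n d X (sym_outer r V W) i j * U' j 0)"

lemma frob_linear: "frob d X (\<lambda>i j. a * A i j + b * B i j) = a * frob d X A + b * frob d X B"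
  by (simp add: frob_def algebra_simps sum.distrib sum_distrib_left)

lemma XsX_minus_I_linear:
  "XsX_minus_I n d X (\<lambda>i j. a * A i j + b * B i j) i j =
     a * XsX_minus_I n d X A i j + b * XsX_minus_I n d X B i j"
  by (simp add: XsX_minus_I_def frob_linear algebra_simps sum.distrib sum_distrib_left)

lemma sym_outer_linear:
  "sym_outer r (\<lambda>i l. a * V i l + b * V' i l) W = (\<lambda>i j. a * sym_outer r V W i j + b * sym_outer r V' W i j)"
  "sym_outer r V (\<lambda>i l. a * W i l + b * W' i l) = (\<lambda>i j. a * sym_outer r V W i j + b * sym_outer r V W' i j)"
  by (simp_all add: sym_outer_def algebra_simps sum.distrib sum_distrib_left)

lemma dev_form_linear:
  "dev_form n d r X (\<lambda>i l. a * V i l + b * V' i l) W U U' =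
     a * dev_form n d r X V W U U' + b * dev_form n d r X V' W U U'"
  "dev_form n d r X V (\<lambda>i l. a * W i l + b * W' i l) U U' =
     a * dev_form n d r X V W U U' + b * dev_form n d r X V W' U U'"
  "dev_form n d r X V W (\<lambda>i l. a * U i l + b * Y i l) U' =
     a * dev_form n d r X V W U U' + b * dev_form n d r X V W Y U'"
  "dev_form n d r X V W U (\<lambda>i l. a * U' i l + b * Y i l) =
     a * dev_form n d r X V W U U' + b * dev_form n d r X V W U Y"
  by (simp_all add: dev_form_def sym_outer_linear XsX_minus_I_linear algebra_simps
      sum.distrib sum_distrib_left)

lemma dev_form_scale:
  "dev_form n d r X (\<lambda>i l. a * V i l) (\<lambda>i l. b * W i l) (\<lambda>i l. c * U i l) (\<lambda>i l. e * U' i l) =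
     a * b * c * e * dev_form n d r X V W U U'"
  using dev_form_linear[where b = 0] by simp

lemma dev_form_diff:
  "dev_form n d r X V W U U' - dev_form n d r X V0 W U U' = dev_form n d r X (\<lambda>i l. V i l - V0 i l) W U U'"
  "dev_form n d r X V W U U' - dev_form n d r X V W0 U U' = dev_form n d r X V (\<lambda>i l. W i l - W0 i l) U U'"
  "dev_form n d r X V W U U' - dev_form n d r X V W U0 U' = dev_form n d r X V W (\<lambda>i l. U i l - U0 i l) U'"
  "dev_form n d r X V W U U' - dev_form n d r X V W U U0' = dev_form n d r X V W U (\<lambda>i l. U' i l - U0' i l)"
  using dev_form_linear[where a = 1 and b = "-1"] by simp_all

lemma abs_sym_outer_le:
  assumes "spec_norm d r V \<le> 1" "spec_norm d r W \<le> 1" "i < d" "j < d"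
  shows "\<bar>sym_outer r V W i j\<bar> \<le> 2 * real r"
proof -
  have cross: "\<bar>\<Sum>l<r. A i l * B j l\<bar> \<le> real r" if "spec_norm d r A \<le> 1" "spec_norm d r B \<le> 1" for A B
  proof -
    have "\<bar>\<Sum>l<r. A i l * B j l\<bar> \<le> (\<Sum>l<r. \<bar>A i l\<bar> * \<bar>B j l\<bar>)"
      by (rule order.trans[OF sum_abs]) (simp add: abs_mult)
    also have "\<dots> \<le> (\<Sum>l<r. 1 * 1)"
    proof (intro sum_mono mult_mono)
      fix l assume "l \<in> {..<r}"
      then show "\<bar>A i l\<bar> \<le> 1" "\<bar>B j l\<bar> \<le> 1"
        using that assms abs_entry_le_spec_norm[of i d l r A] abs_entry_le_spec_norm[of j d l r B] by auto
    qed auto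
    finally show ?thesis by simp
  qed
  show ?thesis
    using cross[OF assms(1,2)] cross[OF assms(2,1)]
      abs_triangle_ineq[of "\<Sum>l<r. V i l * W j l" "\<Sum>l<r. W i l * V j l"]
    unfolding sym_outer_def by linarith
qed

lemma abs_frob_le:
  assumes "\<And>p q. p < d \<Longrightarrow> q < d \<Longrightarrow> \<bar>A p q\<bar> \<le> c"
  shows "\<bar>frob d Y A\<bar> \<le> c * (\<Sum>p<d. \<Sum>q<d. \<bar>Y p q\<bar>)"
proof -
  have "\<bar>frob d Y A\<bar> \<le> (\<Sum>p<d. \<Sum>q<d. \<bar>Y p q\<bar> * \<bar>A p q\<bar>)"
    unfolding frob_def
    by (rule order.trans[OF sum_abs], rule sum_mono, rule order.trans[OF sum_abs]) (simp add: abs_mult)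
  also have "\<dots> \<le> (\<Sum>p<d. \<Sum>q<d. \<bar>Y p q\<bar> * c)"
    using assms by (intro sum_mono mult_left_mono) auto
  finally show ?thesis by (simp add: sum_distrib_left sum_distrib_right mult.commute)
qed

lemma bdd_above_dev_form:
  "bdd_above {\<bar>dev_form n d r X V W U U'\<bar> | V W U U'. spec_norm d r V \<le> 1 \<and> spec_norm d r W \<le> 1 \<and>
     spec_norm d 1 U \<le> 1 \<and> spec_norm d 1 U' \<le> 1}"
proof -
  define F where "F k = (\<Sum>p<d. \<Sum>q<d. \<bar>X k p q\<bar>)" for k
  define M where "M i j = (1 / real n) * (\<Sum>k<n. 2 * real r * F k * \<bar>X k i j\<bar>) + 2 * real r" for i j
  have M_nonneg: "0 \<le> M i j" for i j
    unfolding M_def F_def by (intro add_nonneg_nonneg mult_nonneg_nonneg sum_nonneg) auto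
  have "\<bar>dev_form n d r X V W U U'\<bar> \<le> (\<Sum>i<d. \<Sum>j<d. M i j)"
    if V: "spec_norm d r V \<le> 1" and W: "spec_norm d r W \<le> 1"
      and U: "spec_norm d 1 U \<le> 1" and U': "spec_norm d 1 U' \<le> 1" for V W U U'
  proof -
    define A where "A = sym_outer r V W"
    have A: "\<And>p q. p < d \<Longrightarrow> q < d \<Longrightarrow> \<bar>A p q\<bar> \<le> 2 * real r"
      unfolding A_def using abs_sym_outer_le[OF V W] by blast
    have "\<bar>XsX_minus_I n d X A i j\<bar> \<le> M i j" if "i < d" "j < d" for i j
    proof -
      have "\<bar>\<Sum>k<n. frob d (X k) A * X k i j\<bar> \<le> (\<Sum>k<n. \<bar>frob d (X k) A\<bar> * \<bar>X k i j\<bar>)"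
        by (rule order.trans[OF sum_abs]) (simp add: abs_mult)
      also have "\<dots> \<le> (\<Sum>k<n. 2 * real r * F k * \<bar>X k i j\<bar>)"
        unfolding F_def by (intro sum_mono mult_right_mono abs_frob_le A) auto
      finally have "\<bar>(1 / real n) * (\<Sum>k<n. frob d (X k) A * X k i j)\<bar> \<le>
          (1 / real n) * (\<Sum>k<n. 2 * real r * F k * \<bar>X k i j\<bar>)"
        by (simp add: abs_mult divide_right_mono)
      then show ?thesis
        using A[OF that] abs_triangle_ineq4[of "(1 / real n) * (\<Sum>k<n. frob d (X k) A * X k i j)" "A i j"]
        unfolding XsX_minus_I_def M_def by linarith
    qed
    moreover have "\<bar>U i 0\<bar> \<le> 1" "\<bar>U' i 0\<bar> \<le> 1" if "i < d" for i
      using abs_entry_le_spec_norm[of i d 0 1 U] abs_entry_le_spec_norm[of i d 0 1 U'] U U' that by auto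
    ultimately have "(\<Sum>i<d. \<Sum>j<d. \<bar>U i 0\<bar> * \<bar>XsX_minus_I n d X A i j\<bar> * \<bar>U' j 0\<bar>) \<le>
        (\<Sum>i<d. \<Sum>j<d. 1 * M i j * 1)"
      using M_nonneg by (intro sum_mono mult_mono) auto
    then show ?thesis
      unfolding dev_form_def A_def[symmetric]
      by (intro order.trans[OF sum_abs] order.trans[OF sum_mono[OF order.trans[OF sum_abs]]])
         (auto simp: abs_mult)
  qed
  then show ?thesis by (intro bdd_aboveI[where M = "\<Sum>i<d. \<Sum>j<d. M i j"]) blast
qed

definition dev_form_sup :: "nat \<Rightarrow> nat \<Rightarrow> nat \<Rightarrow> (nat \<Rightarrow> nat \<Rightarrow> nat \<Rightarrow> real) \<Rightarrow> real"
  where "dev_form_sup n d r X = Sup {\<bar>dev_form n d r X V W U U'\<bar> | V W U U'. spec_norm d r V \<le> 1 \<and>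
    spec_norm d r W \<le> 1 \<and> spec_norm d 1 U \<le> 1 \<and> spec_norm d 1 U' \<le> 1}"

lemma abs_dev_form_le_sup:
  assumes "spec_norm d r V \<le> 1" "spec_norm d r W \<le> 1" "spec_norm d 1 U \<le> 1" "spec_norm d 1 U' \<le> 1"
  shows "\<bar>dev_form n d r X V W U U'\<bar> \<le> dev_form_sup n d r X"
  unfolding dev_form_sup_def using bdd_above_dev_form[of n d r X] assms by (intro cSup_upper) auto

lemma abs_dev_form_le_scaled_sup:
  assumes "spec_norm d r V \<le> a" "spec_norm d r W \<le> a'" "spec_norm d 1 U \<le> c" "spec_norm d 1 U' \<le> c'"
    and "0 < a" "0 < a'" "0 < c" "0 < c'"
  shows "\<bar>dev_form n d r X V W U U'\<bar> \<le> a * a' * c * c' * dev_form_sup n d r X"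
proof -
  let ?V = "\<lambda>i l. (1/a) * V i l" and ?W = "\<lambda>i l. (1/a') * W i l"
    and ?U = "\<lambda>i l. (1/c) * U i l" and ?U' = "\<lambda>i l. (1/c') * U' i l"
  have "dev_form n d r X V W U U' = a * a' * c * c' * dev_form n d r X ?V ?W ?U ?U'"
    using dev_form_scale[of n d r X a ?V a' ?W c ?U c' ?U'] assms by simp
  moreover have "spec_norm d r ?V \<le> 1" "spec_norm d r ?W \<le> 1" "spec_norm d 1 ?U \<le> 1"
    "spec_norm d 1 ?U' \<le> 1"
    unfolding spec_norm_scale using assms by (simp_all add: field_simps)
  then have "\<bar>dev_form n d r X ?V ?W ?U ?U'\<bar> \<le> dev_form_sup n d r X" by (rule abs_dev_form_le_sup)
  ultimately show ?thesis
    using assms by (simp add: abs_mult mult_left_mono)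
qed

text \<open>Moving one argument to a nearest point of its \<open>1/8\<close>-net changes the form by at most \<open>S/8\<close>, where
  \<open>S\<close> is the supremum; moving all four gives \<open>S \<le> b + S/2\<close>.\<close>

lemma dev_form_sup_le_of_nets:
  assumes NV: "\<And>V0. V0 \<in> NV \<Longrightarrow> spec_norm d r V0 \<le> 1"
    "\<And>V. spec_norm d r V \<le> 1 \<Longrightarrow> \<exists>V0\<in>NV. spec_norm d r (\<lambda>i j. V i j - V0 i j) \<le> 1/8"
    and NU: "\<And>U0. U0 \<in> NU \<Longrightarrow> spec_norm d 1 U0 \<le> 1"
    "\<And>U. spec_norm d 1 U \<le> 1 \<Longrightarrow> \<exists>U0\<in>NU. spec_norm d 1 (\<lambda>i j. U i j - U0 i j) \<le> 1/8"
    and net: "\<And>V0 W0 U0 U0'. V0 \<in> NV \<Longrightarrow> W0 \<in> NV \<Longrightarrow> U0 \<in> NU \<Longrightarrow> U0' \<in> NU \<Longrightarrow>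
      \<bar>dev_form n d r X V0 W0 U0 U0'\<bar> \<le> b"
  shows "dev_form_sup n d r X \<le> 2 * b"
proof -
  let ?S = "dev_form_sup n d r X"
  have "\<bar>dev_form n d r X V W U U'\<bar> \<le> b + ?S / 2"
    if V: "spec_norm d r V \<le> 1" and W: "spec_norm d r W \<le> 1"
      and U: "spec_norm d 1 U \<le> 1" and U': "spec_norm d 1 U' \<le> 1" for V W U U'
  proof -
    obtain V0 where V0: "V0 \<in> NV" "spec_norm d r (\<lambda>i j. V i j - V0 i j) \<le> 1/8" using NV(2)[OF V] ..
    obtain W0 where W0: "W0 \<in> NV" "spec_norm d r (\<lambda>i j. W i j - W0 i j) \<le> 1/8" using NV(2)[OF W] ..
    obtain U0 where U0: "U0 \<in> NU" "spec_norm d 1 (\<lambda>i j. U i j - U0 i j) \<le> 1/8" using NU(2)[OF U] ..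
    obtain U0' where U0': "U0' \<in> NU" "spec_norm d 1 (\<lambda>i j. U' i j - U0' i j) \<le> 1/8" using NU(2)[OF U'] ..
    have "dev_form n d r X V W U U' = dev_form n d r X V0 W0 U0 U0'
       + dev_form n d r X (\<lambda>i l. V i l - V0 i l) W U U'
       + dev_form n d r X V0 (\<lambda>i l. W i l - W0 i l) U U'
       + dev_form n d r X V0 W0 (\<lambda>i l. U i l - U0 i l) U'
       + dev_form n d r X V0 W0 U0 (\<lambda>i l. U' i l - U0' i l)"
      unfolding dev_form_diff[symmetric] by linarith
    moreover have "\<bar>dev_form n d r X V0 W0 U0 U0'\<bar> \<le> b"
      using V0 W0 U0 U0' by (intro net)
    moreover have "\<bar>dev_form n d r X (\<lambda>i l. V i l - V0 i l) W U U'\<bar> \<le> (1/8) * 1 * 1 * 1 * ?S"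
      using V0 W U U' by (intro abs_dev_form_le_scaled_sup) auto
    moreover have "\<bar>dev_form n d r X V0 (\<lambda>i l. W i l - W0 i l) U U'\<bar> \<le> 1 * (1/8) * 1 * 1 * ?S"
      using NV(1) V0 W0 U U' by (intro abs_dev_form_le_scaled_sup) auto
    moreover have "\<bar>dev_form n d r X V0 W0 (\<lambda>i l. U i l - U0 i l) U'\<bar> \<le> 1 * 1 * (1/8) * 1 * ?S"
      using NV(1) V0 W0 U0 U' by (intro abs_dev_form_le_scaled_sup) auto
    moreover have "\<bar>dev_form n d r X V0 W0 U0 (\<lambda>i l. U' i l - U0' i l)\<bar> \<le> 1 * 1 * 1 * (1/8) * ?S"
      using NV(1) NU(1) V0 W0 U0 U0' by (intro abs_dev_form_le_scaled_sup) auto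
    ultimately show ?thesis by linarith
  qed
  then have "?S \<le> b + ?S / 2"
    unfolding dev_form_sup_def
    by (intro cSup_least) (auto intro!: exI[of _ "\<lambda>i j. 0"] simp: spec_norm_zero)
  then show ?thesis by simp
qed

lemma spec_norm_le_from_dev_form:
  assumes "\<And>U U'. spec_norm d 1 U \<le> 1 \<Longrightarrow> spec_norm d 1 U' \<le> 1 \<Longrightarrow>
    \<bar>dev_form n d r X V V U U'\<bar> \<le> 2 * b"
  shows "spec_norm d d (XsX_minus_I n d X (outer_VVt r V)) \<le> b"
proof -
  define M where "M = XsX_minus_I n d X (outer_VVt r V)"
  have sym_outer_VV: "sym_outer r V V = (\<lambda>i j. 2 * outer_VVt r V i j + 0 * outer_VVt r V i j)"
    by (simp add: sym_outer_def outer_VVt_def fun_eq_iff mult.commute)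
  have dev_form_M: "dev_form n d r X V V U U' = 2 * (\<Sum>i<d. \<Sum>j<d. U i 0 * M i j * U' j 0)" for U U'
    unfolding dev_form_def M_def sym_outer_VV XsX_minus_I_linear by (simp add: sum_distrib_left algebra_simps)
  have b: "0 \<le> b"
    using assms[of "\<lambda>i j. 0" "\<lambda>i j. 0"] by (simp add: dev_form_def spec_norm_zero)
  show ?thesis
    unfolding M_def[symmetric]
  proof (rule spec_norm_least)
    fix x :: "nat \<Rightarrow> real" assume x: "L2_set x {..<d} \<le> 1"
    define y where "y i = (\<Sum>j<d. M i j * x j)" for i
    define c where "c = L2_set y {..<d}"
    show "L2_set (\<lambda>i. \<Sum>j<d. M i j * x j) {..<d} \<le> b"
    proof (cases "c = 0")
      case False
      then have c: "c > 0" using L2_set_nonneg[of y "{..<d}"] unfolding c_def by linarith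
      have "(\<Sum>j<d. (y i / c) * M i j * x j) = (y i / c) * y i" for i
        unfolding y_def by (simp add: sum_distrib_left mult.assoc)
      then have "(\<Sum>i<d. \<Sum>j<d. (y i / c) * M i j * x j) = (\<Sum>i<d. (y i)\<^sup>2) / c"
        by (simp add: power2_eq_square sum_divide_distrib)
      also have "\<dots> = c"
        by (simp add: c_def L2_set_def real_div_sqrt sum_nonneg)
      finally have "2 * c \<le> \<bar>dev_form n d r X V V (\<lambda>i j. y i / c) (\<lambda>i j. x i)\<bar>"
        by (simp add: dev_form_M)
      also have "\<dots> \<le> 2 * b"
        using c x spec_norm_column_le[of d "\<lambda>i. y i / c"] spec_norm_column_le[of d x]
        by (intro assms) (simp_all add: L2_set_divide c_def)
      finally show ?thesis by (simp add: y_def[symmetric] c_def)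
    qed (use b in \<open>simp add: y_def[symmetric] c_def\<close>)
  qed
qed

lemma spec_norm_XsX_minus_I_le_of_nets:
  assumes NV: "\<And>V0. V0 \<in> NV \<Longrightarrow> spec_norm d r V0 \<le> 1"
    "\<And>V. spec_norm d r V \<le> 1 \<Longrightarrow> \<exists>V0\<in>NV. spec_norm d r (\<lambda>i j. V i j - V0 i j) \<le> 1/8"
    and NU: "\<And>U0. U0 \<in> NU \<Longrightarrow> spec_norm d 1 U0 \<le> 1"
    "\<And>U. spec_norm d 1 U \<le> 1 \<Longrightarrow> \<exists>U0\<in>NU. spec_norm d 1 (\<lambda>i j. U i j - U0 i j) \<le> 1/8"
    and net: "\<And>V0 W0 U0 U0'. V0 \<in> NV \<Longrightarrow> W0 \<in> NV \<Longrightarrow> U0 \<in> NU \<Longrightarrow> U0' \<in> NU \<Longrightarrow>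
      \<bar>dev_form n d r X V0 W0 U0 U0'\<bar> \<le> b"
    and V: "spec_norm d r V \<le> 1"
  shows "spec_norm d d (XsX_minus_I n d X (outer_VVt r V)) \<le> b"
proof (rule spec_norm_le_from_dev_form)
  fix U U' assume "spec_norm d 1 U \<le> 1" "spec_norm d 1 U' \<le> 1"
  with V have "\<bar>dev_form n d r X V V U U'\<bar> \<le> dev_form_sup n d r X"
    by (intro abs_dev_form_le_sup)
  also have "\<dots> \<le> 2 * b"
    using NV NU net by (rule dev_form_sup_le_of_nets)
  finally show "\<bar>dev_form n d r X V V U U'\<bar> \<le> 2 * b" .
qed

lemma dev_form_eq_frob:
  "dev_form n d r X V W U U' =
     (1 / real n) * (\<Sum>k<n. frob d (X k) (sym_outer r V W) * frob d (X k) (col_outer U U'))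
     - frob d (sym_outer r V W) (col_outer U U')"
proof -
  define A where "A = sym_outer r V W"
  define F where "F k = frob d (X k) A" for k
  have "dev_form n d r X V W U U' =
      (\<Sum>i<d. \<Sum>j<d. (1 / real n) * (\<Sum>k<n. F k * (X k i j * (U i 0 * U' j 0))) - A i j * (U i 0 * U' j 0))"
    unfolding dev_form_def XsX_minus_I_def A_def[symmetric] F_def[symmetric]
    by (intro sum.cong refl) (simp add: algebra_simps sum_distrib_left sum_distrib_right)
  also have "\<dots> = (1 / real n) * (\<Sum>i<d. \<Sum>j<d. \<Sum>k<n. F k * (X k i j * (U i 0 * U' j 0)))
      - (\<Sum>i<d. \<Sum>j<d. A i j * (U i 0 * U' j 0))"
    by (simp add: sum_subtractf sum_distrib_left)
  also have "(\<Sum>i<d. \<Sum>j<d. \<Sum>k<n. F k * (X k i j * (U i 0 * U' j 0))) =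
      (\<Sum>i<d. \<Sum>k<n. \<Sum>j<d. F k * (X k i j * (U i 0 * U' j 0)))"
    by (intro sum.cong refl sum.swap)
  also have "\<dots> = (\<Sum>k<n. \<Sum>i<d. \<Sum>j<d. F k * (X k i j * (U i 0 * U' j 0)))"
    by (rule sum.swap)
  finally show ?thesis
    by (simp add: F_def A_def frob_def col_outer_def sum_distrib_left)
qed

lemma sym_outer_sym: "sym_outer r V W i j = sym_outer r V W j i"
  by (simp add: sym_outer_def mult.commute add.commute)

text \<open>Polarization: with \<open>A = sym_outer r V W\<close>, \<open>B = col_outer U U'\<close> and \<open>C\<^sub>\<plusminus> = A/s \<plusminus> s B\<close>, the
  bilinear form in \<open>A\<close> and \<open>B\<close> is a difference of two quadratic deviations, each of which concentrates.\<close>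

definition polar_matrix :: "nat \<Rightarrow> real \<Rightarrow> (nat \<Rightarrow> nat \<Rightarrow> real) \<Rightarrow> (nat \<Rightarrow> nat \<Rightarrow> real) \<Rightarrow>
    (nat \<Rightarrow> nat \<Rightarrow> real) \<Rightarrow> (nat \<Rightarrow> nat \<Rightarrow> real) \<Rightarrow> real \<Rightarrow> nat \<Rightarrow> nat \<Rightarrow> real"
  where "polar_matrix r s V W U U' c = (\<lambda>i j. (1/s) * sym_outer r V W i j + c * col_outer U U' i j)"

lemma dev_form_polarization:
  assumes s: "s \<noteq> 0"
  shows "dev_form n d r (goe_mat \<omega>) V W U U' =
    (goe_deviation n d (polar_matrix r s V W U U' s) \<omega> - goe_deviation n d (polar_matrix r s V W U U' (- s)) \<omega>) / 4"
proof -
  let ?Cp = "polar_matrix r s V W U U' s" and ?Cm = "polar_matrix r s V W U U' (- s)"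
  have prod_eq: "(\<Sum>k<n. goe_inner d \<omega> k (sym_outer r V W) * goe_inner d \<omega> k (col_outer U U')) =
      ((\<Sum>k<n. (goe_inner d \<omega> k ?Cp)\<^sup>2) - (\<Sum>k<n. (goe_inner d \<omega> k ?Cm)\<^sup>2)) / 4"
    unfolding polar_matrix_def goe_inner_polarization[OF s]
    by (simp add: sum_subtractf sum_divide_distrib[symmetric])
  have frob_eq: "frob d (sym_outer r V W) (col_outer U U') = (goe_variance d ?Cp - goe_variance d ?Cm) / 4"
    unfolding polar_matrix_def goe_variance_polarization[OF s]
    by (subst frob_sym_eq_sum_upper_pairs) (auto intro: sym_outer_sym)
  have "dev_form n d r (goe_mat \<omega>) V W U U' =
      (1 / real n) * (((\<Sum>k<n. (goe_inner d \<omega> k ?Cp)\<^sup>2) - (\<Sum>k<n. (goe_inner d \<omega> k ?Cm)\<^sup>2)) / 4)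
      - (goe_variance d ?Cp - goe_variance d ?Cm) / 4"
    unfolding dev_form_eq_frob frob_goe_mat prod_eq frob_eq ..
  also have "\<dots> = (((\<Sum>k<n. (goe_inner d \<omega> k ?Cp)\<^sup>2) / real n - goe_variance d ?Cp)
      - ((\<Sum>k<n. (goe_inner d \<omega> k ?Cm)\<^sup>2) / real n - goe_variance d ?Cm)) / 4"
    by (cases "n = 0") (simp_all add: field_simps)
  finally show ?thesis
    unfolding goe_deviation_def .
qed

lemma abs_dev_form_le_of_deviations:
  assumes "s \<noteq> 0" "\<bar>goe_deviation n d (polar_matrix r s V W U U' s) \<omega>\<bar> \<le> a"
    "\<bar>goe_deviation n d (polar_matrix r s V W U U' (- s)) \<omega>\<bar> \<le> a"
  shows "\<bar>dev_form n d r (goe_mat \<omega>) V W U U'\<bar> \<le> a / 2"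
  using assms(2,3) unfolding dev_form_polarization[OF assms(1)] by (simp add: abs_le_iff)

lemma sum_sq_outer_le:
  assumes V: "spec_norm d r V \<le> 1" and W: "spec_norm d r W \<le> 1"
  shows "(\<Sum>i<d. \<Sum>j<d. (\<Sum>l<r. V i l * W j l)\<^sup>2) \<le> real r"
proof -
  have "(\<Sum>i<d. \<Sum>j<d. (\<Sum>l<r. V i l * W j l)\<^sup>2) = (\<Sum>j<d. \<Sum>i<d. (\<Sum>l<r. V i l * W j l)\<^sup>2)"
    by (rule sum.swap)
  also have "\<dots> \<le> (\<Sum>j<d. \<Sum>l<r. (W j l)\<^sup>2)"
  proof (rule sum_mono)
    fix j
    have "L2_set (\<lambda>i. \<Sum>l<r. V i l * W j l) {..<d} \<le> L2_set (W j) {..<r}"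
      using spec_norm_mat_vec[where A = V and x = "W j" and k = r and m = d] V spec_norm_nonneg[of d r V]
      by (meson order.trans mult_left_le_one_le L2_set_nonneg)
    then show "(\<Sum>i<d. (\<Sum>l<r. V i l * W j l)\<^sup>2) \<le> (\<Sum>l<r. (W j l)\<^sup>2)"
      by (simp add: L2_set_def sum_nonneg)
  qed
  also have "\<dots> = (\<Sum>l<r. \<Sum>j<d. (W j l)\<^sup>2)" by (rule sum.swap)
  also have "\<dots> \<le> (\<Sum>l<r. 1)" by (intro sum_mono sum_column_squares_le[OF W]) auto
  finally show ?thesis by simp
qed

lemma sum_sq_sym_outer_le:
  assumes V: "spec_norm d r V \<le> 1" and W: "spec_norm d r W \<le> 1"
  shows "(\<Sum>i<d. \<Sum>j<d. (sym_outer r V W i j)\<^sup>2) \<le> 4 * real r"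
proof -
  have "(\<Sum>i<d. \<Sum>j<d. (sym_outer r V W i j)\<^sup>2) \<le>
      (\<Sum>i<d. \<Sum>j<d. 2 * (\<Sum>l<r. V i l * W j l)\<^sup>2 + 2 * (\<Sum>l<r. W i l * V j l)\<^sup>2)"
    unfolding sym_outer_def by (intro sum_mono power2_sum_le)
  also have "\<dots> = 2 * (\<Sum>i<d. \<Sum>j<d. (\<Sum>l<r. V i l * W j l)\<^sup>2) + 2 * (\<Sum>i<d. \<Sum>j<d. (\<Sum>l<r. W i l * V j l)\<^sup>2)"
    by (simp add: sum.distrib sum_distrib_left)
  finally show ?thesis
    using sum_sq_outer_le[OF V W] sum_sq_outer_le[OF W V] by linarith
qed

lemma sum_sq_col_outer_le:
  assumes "spec_norm d 1 U \<le> 1" "spec_norm d 1 U' \<le> 1"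
  shows "(\<Sum>i<d. \<Sum>j<d. (col_outer U U' i j)\<^sup>2) \<le> 1"
proof -
  have "(\<Sum>i<d. \<Sum>j<d. (col_outer U U' i j)\<^sup>2) = (\<Sum>i<d. (U i 0)\<^sup>2) * (\<Sum>j<d. (U' j 0)\<^sup>2)"
    by (simp add: col_outer_def power_mult_distrib sum_product)
  also have "\<dots> \<le> 1 * 1"
    using sum_column_squares_le[OF assms(1)] sum_column_squares_le[OF assms(2)]
    by (intro mult_mono) (auto intro: sum_nonneg)
  finally show ?thesis by simp
qed

text \<open>Since \<open>\<parallel>A\<parallel>\<^sub>F\<^sup>2 \<le> 4 r\<close> and \<open>\<parallel>B\<parallel>\<^sub>F\<^sup>2 \<le> 1\<close>, the variance of \<open>C\<^sub>\<plusminus>\<close> is at most \<open>8 r / s\<^sup>2 + 2 s\<^sup>2\<close>,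
  which the choice \<open>s\<^sup>2 = 2 \<surd>r\<close> minimizes.\<close>

lemma goe_variance_polarization_le:
  assumes "spec_norm d r V \<le> 1" "spec_norm d r W \<le> 1" "spec_norm d 1 U \<le> 1" "spec_norm d 1 U' \<le> 1"
    and r: "r \<ge> 1" and s: "s = sqrt (2 * sqrt (real r))" and c: "c = s \<or> c = - s"
  shows "goe_variance d (polar_matrix r s V W U U' c) \<le> 8 * sqrt (real r)"
proof -
  have s2: "s\<^sup>2 = 2 * sqrt (real r)" "c\<^sup>2 = s\<^sup>2" and s_pos: "s > 0" using s c r by auto
  have "goe_variance d (polar_matrix r s V W U U' c) \<le>
      2 * goe_variance d (sym_outer r V W) / s\<^sup>2 + 2 * c\<^sup>2 * goe_variance d (col_outer U U')"
    unfolding polar_matrix_def by (rule goe_variance_add_le[OF s_pos])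
  also have "\<dots> \<le> 2 * (4 * real r) / s\<^sup>2 + 2 * c\<^sup>2 * 1"
    using goe_variance_le_frobenius[of d "sym_outer r V W"] sum_sq_sym_outer_le[OF assms(1,2)]
      goe_variance_le_frobenius[of d "col_outer U U'"] sum_sq_col_outer_le[OF assms(3,4)] s_pos
    by (intro add_mono divide_right_mono mult_left_mono) auto
  also have "2 * (4 * real r) / s\<^sup>2 = 4 * sqrt (real r)"
  proof -
    have "real r = sqrt (real r) * sqrt (real r)" by simp
    then show ?thesis using r unfolding s2 by (simp add: field_simps)
  qed
  finally show ?thesis unfolding s2 by simp
qed

section \<open>The union bound over the nets\<close>

lemma goe_net_event:
  assumes n: "n \<ge> 1" and d: "d \<ge> 1" and r: "r \<ge> 1"
    and NV: "finite NV" "\<And>V. V \<in> NV \<Longrightarrow> spec_norm d r V \<le> 1"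
    and NU: "finite NU" "\<And>U. U \<in> NU \<Longrightarrow> spec_norm d 1 U \<le> 1"
    and t: "0 \<le> t" "t \<le> 1"
  obtains E where "E \<in> sets (goe_sample_space n d)"
    "\<And>\<omega> V0 W0 U0 U0'. \<omega> \<in> E \<Longrightarrow> V0 \<in> NV \<Longrightarrow> W0 \<in> NV \<Longrightarrow> U0 \<in> NU \<Longrightarrow> U0' \<in> NU \<Longrightarrow>
      \<bar>dev_form n d r (goe_mat \<omega>) V0 W0 U0 U0'\<bar> \<le> 4 * t * sqrt (real r)"
    "measure (goe_sample_space n d) E \<ge>
      1 - 4 * (real (card NV))\<^sup>2 * (real (card NU))\<^sup>2 * exp (- real n * t\<^sup>2 / 16)"
proof -
  interpret P: prob_space "goe_sample_space n d" by (rule prob_space_goe_sample_space)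
  define s where "s = sqrt (2 * sqrt (real r))"
  have s: "s \<noteq> 0" using r by (simp add: s_def)
  define IDX where "IDX = NV \<times> NV \<times> NU \<times> NU \<times> {s, - s}"
  define bad where "bad = (\<lambda>(V0, W0, U0, U0', c). {\<omega> \<in> space (goe_sample_space n d).
      t * (8 * sqrt (real r)) < \<bar>goe_deviation n d (polar_matrix r s V0 W0 U0 U0' c) \<omega>\<bar>})"
  define E where "E = space (goe_sample_space n d) - (\<Union>x\<in>IDX. bad x)"
  have "card IDX \<le> card NV * card NV * card NU * card NU * 2"
    using NV(1) NU(1) card_insert_le_m1[of 2 "{- s}" s]
    by (simp add: IDX_def card_cartesian_product mult_le_mono)
  then have card_IDX: "real (card IDX) \<le> 2 * (real (card NV))\<^sup>2 * (real (card NU))\<^sup>2"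
    unfolding power2_eq_square by (metis (mono_tags) of_nat_le_iff of_nat_mult of_nat_numeral mult.commute
      mult.left_commute)
  have "bad x \<in> P.events" for x
    using goe_deviation_measurable[of n d] by (simp add: bad_def split: prod.split)
  moreover have "P.prob (bad x) \<le> 2 * exp (- real n * t\<^sup>2 / 16)" if "x \<in> IDX" for x
  proof -
    obtain V0 W0 U0 U0' c where x: "x = (V0, W0, U0, U0', c)" by (cases x)
    have "goe_variance d (polar_matrix r s V0 W0 U0 U0' c) \<le> 8 * sqrt (real r)"
      using that NV(2) NU(2) r by (intro goe_variance_polarization_le) (auto simp: x IDX_def s_def)
    then show ?thesis
      unfolding x bad_def prod.case by (rule goe_deviation_tail[OF n d t])
  qed
  ultimately have "P.prob E \<ge> 1 - real (card IDX) * (2 * exp (- real n * t\<^sup>2 / 16))"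
    unfolding E_def using NV(1) NU(1) by (intro P.prob_compl_UN_ge) (auto simp: IDX_def)
  moreover have "real (card IDX) * (2 * exp (- real n * t\<^sup>2 / 16)) \<le>
      4 * (real (card NV))\<^sup>2 * (real (card NU))\<^sup>2 * exp (- real n * t\<^sup>2 / 16)"
    using mult_right_mono[OF card_IDX, of "2 * exp (- real n * t\<^sup>2 / 16)"] by simp
  moreover have "\<bar>dev_form n d r (goe_mat \<omega>) V0 W0 U0 U0'\<bar> \<le> 4 * t * sqrt (real r)"
    if "\<omega> \<in> E" "V0 \<in> NV" "W0 \<in> NV" "U0 \<in> NU" "U0' \<in> NU" for \<omega> V0 W0 U0 U0'
  proof -
    have "\<bar>goe_deviation n d (polar_matrix r s V0 W0 U0 U0' c) \<omega>\<bar> \<le> t * (8 * sqrt (real r))"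
      if "c \<in> {s, - s}" for c
      using \<open>\<omega> \<in> E\<close> \<open>V0 \<in> NV\<close> \<open>W0 \<in> NV\<close> \<open>U0 \<in> NU\<close> \<open>U0' \<in> NU\<close> that
      by (auto simp: E_def IDX_def bad_def not_less)
    then have "\<bar>dev_form n d r (goe_mat \<omega>) V0 W0 U0 U0'\<bar> \<le> t * (8 * sqrt (real r)) / 2"
      by (intro abs_dev_form_le_of_deviations[OF s]) auto
    then show ?thesis by simp
  qed
  moreover have "E \<in> P.events"
    unfolding E_def using NV(1) NU(1) \<open>\<And>x. bad x \<in> P.events\<close>
    by (intro sets.compl_sets sets.finite_UN) (auto simp: IDX_def)
  ultimately show ?thesis using that by (meson order.trans diff_left_mono)
qed

lemma goe_XsX_minus_I_event:
  assumes n: "n \<ge> 1" and d: "d \<ge> 1" and r: "r \<ge> 1" and t: "0 \<le> t" "t \<le> 1"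
  obtains E where "E \<in> sets (goe_sample_space n d)"
    "\<And>\<omega> V. \<omega> \<in> E \<Longrightarrow> spec_norm d r V \<le> 1 \<Longrightarrow>
      spec_norm d d (XsX_minus_I n d (goe_mat \<omega>) (outer_VVt r V)) \<le> 4 * t * sqrt (real r)"
    "measure (goe_sample_space n d) E \<ge> 1 - 4 * 17 ^ (4 * (d * r)) * exp (- real n * t\<^sup>2 / 16)"
proof -
  obtain NV where NV: "finite NV" "\<And>V. V \<in> NV \<Longrightarrow> spec_norm d r V \<le> 1" "real (card NV) \<le> 17 ^ (d * r)"
    "\<And>V. spec_norm d r V \<le> 1 \<Longrightarrow> \<exists>V0\<in>NV. spec_norm d r (\<lambda>i j. V i j - V0 i j) \<le> 1/8"
    using spec_norm_net[of "1/8" d r] by auto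
  obtain NU where NU: "finite NU" "\<And>U. U \<in> NU \<Longrightarrow> spec_norm d 1 U \<le> 1" "real (card NU) \<le> 17 ^ (d * 1)"
    "\<And>U. spec_norm d 1 U \<le> 1 \<Longrightarrow> \<exists>U0\<in>NU. spec_norm d 1 (\<lambda>i j. U i j - U0 i j) \<le> 1/8"
    using spec_norm_net[of "1/8" d 1] by auto
  obtain E where E: "E \<in> sets (goe_sample_space n d)"
    "\<And>\<omega> V0 W0 U0 U0'. \<omega> \<in> E \<Longrightarrow> V0 \<in> NV \<Longrightarrow> W0 \<in> NV \<Longrightarrow> U0 \<in> NU \<Longrightarrow> U0' \<in> NU \<Longrightarrow>
      \<bar>dev_form n d r (goe_mat \<omega>) V0 W0 U0 U0'\<bar> \<le> 4 * t * sqrt (real r)"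
    "measure (goe_sample_space n d) E \<ge>
      1 - 4 * (real (card NV))\<^sup>2 * (real (card NU))\<^sup>2 * exp (- real n * t\<^sup>2 / 16)"
    using goe_net_event[OF n d r NV(1,2) NU(1,2) t] by blast
  have "real (card NU) \<le> 17 ^ (d * r)"
    by (rule order.trans[OF NU(3) power_increasing]) (use r in auto)
  then have "(real (card NV))\<^sup>2 * (real (card NU))\<^sup>2 \<le> (17 ^ (d * r))\<^sup>2 * (17 ^ (d * r))\<^sup>2"
    using NV(3) by (intro mult_mono power_mono) auto
  also have "\<dots> = 17 ^ (4 * (d * r))" by (simp flip: power_mult power_add)
  finally have "4 * (real (card NV))\<^sup>2 * (real (card NU))\<^sup>2 * exp (- real n * t\<^sup>2 / 16) \<le>
      4 * 17 ^ (4 * (d * r)) * exp (- real n * t\<^sup>2 / 16)"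
    by simp
  with E(3) have "measure (goe_sample_space n d) E \<ge> 1 - 4 * 17 ^ (4 * (d * r)) * exp (- real n * t\<^sup>2 / 16)"
    by linarith
  moreover have "spec_norm d d (XsX_minus_I n d (goe_mat \<omega>) (outer_VVt r V)) \<le> 4 * t * sqrt (real r)"
    if "\<omega> \<in> E" "spec_norm d r V \<le> 1" for \<omega> V
    using NV(2,4) NU(2,4) E(2)[OF \<open>\<omega> \<in> E\<close>] that(2) by (rule spec_norm_XsX_minus_I_le_of_nets)
  ultimately show ?thesis using E(1) that by blast
qed

lemma seventeen_power_exp_le:
  assumes "1 \<le> m"
  shows "4 * 17 ^ (4 * m) * exp (- 100 * real m) \<le> 2 * exp (- real m)"
proof -
  have "ln (17::real) \<le> 16" using ln_le_minus_one[of 17] by simp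
  have "(17::real) ^ (4 * m) = exp (real (4 * m) * ln 17)" by (subst exp_of_nat_mult) simp
  also have "\<dots> \<le> exp (64 * real m)"
    using mult_left_mono[OF \<open>ln 17 \<le> 16\<close>, of "4 * real m"] by simp
  finally have "4 * 17 ^ (4 * m) * exp (- 100 * real m) \<le> 4 * exp (64 * real m) * exp (- 100 * real m)"
    by simp
  also have "\<dots> = 4 * exp (- 36 * real m)" by (simp add: mult_exp_exp)
  also have "\<dots> \<le> 2 * exp (- real m)"
  proof -
    have "2 \<le> exp (35 * real m)" using exp_ge_add_one_self[of "35 * real m"] assms by linarith
    then have "2 * exp (- 36 * real m) \<le> exp (35 * real m) * exp (- 36 * real m)" by simp
    then show ?thesis by (simp add: mult_exp_exp)
  qed
  finally show ?thesis .
qed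

lemma goe_XsX_minus_I_bound:
  assumes d: "d \<ge> 1" and r: "r \<ge> 1" and n: "real n \<ge> 1600 * real d * (real r)\<^sup>2"
  shows "\<exists>E \<in> sets (goe_sample_space n d).
    E \<subseteq> {\<omega> \<in> space (goe_sample_space n d). \<forall>V. spec_norm d r V \<le> 1 \<longrightarrow>
      spec_norm d d (XsX_minus_I n d (goe_mat \<omega>) (outer_VVt r V)) \<le> 160 * real r * sqrt (real d) / sqrt (real n)} \<and>
    measure (goe_sample_space n d) E \<ge> 1 - 2 * exp (- real d * real r)"
proof -
  have dr: "1 \<le> d * r" using mult_le_mono[OF d r] by simp
  have "real r \<le> (real r)\<^sup>2" using r by (simp add: power2_eq_square)
  then have "1600 * real (d * r) \<le> 1600 * real d * (real r)\<^sup>2" by (simp add: mult_left_mono)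
  then have ndr: "1600 * real (d * r) \<le> real n" using n by linarith
  then have n1: "n \<ge> 1" using dr by linarith
  define t where "t = 40 * sqrt (real (d * r) / real n)"
  have t2: "t\<^sup>2 = 1600 * real (d * r) / real n"
    unfolding t_def by (simp add: power_mult_distrib)
  have "t\<^sup>2 \<le> 1" unfolding t2 using ndr n1 by (simp add: divide_le_eq)
  moreover have "0 \<le> t" by (simp add: t_def)
  ultimately have t: "0 \<le> t" "t \<le> 1" using power2_le_imp_le[of t 1] by auto
  obtain E where E: "E \<in> sets (goe_sample_space n d)"
    "\<And>\<omega> V. \<omega> \<in> E \<Longrightarrow> spec_norm d r V \<le> 1 \<Longrightarrow>
      spec_norm d d (XsX_minus_I n d (goe_mat \<omega>) (outer_VVt r V)) \<le> 4 * t * sqrt (real r)"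
    "measure (goe_sample_space n d) E \<ge> 1 - 4 * 17 ^ (4 * (d * r)) * exp (- real n * t\<^sup>2 / 16)"
    using goe_XsX_minus_I_event[OF n1 d r t] by blast
  have "4 * t * sqrt (real r) = 160 * (sqrt (real d * real r / real n) * sqrt (real r))"
    by (simp add: t_def)
  also have "\<dots> = 160 * real r * sqrt (real d) / sqrt (real n)"
    by (simp add: real_sqrt_mult real_sqrt_divide)
  finally have "E \<subseteq> {\<omega> \<in> space (goe_sample_space n d). \<forall>V. spec_norm d r V \<le> 1 \<longrightarrow>
      spec_norm d d (XsX_minus_I n d (goe_mat \<omega>) (outer_VVt r V)) \<le> 160 * real r * sqrt (real d) / sqrt (real n)}"
    using E(2) sets.sets_into_space[OF E(1)] by auto
  moreover have "- real n * t\<^sup>2 / 16 = - 100 * real (d * r)" using n1 by (simp add: t2)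
  then have "measure (goe_sample_space n d) E \<ge> 1 - 2 * exp (- real d * real r)"
    using E(3) seventeen_power_exp_le[OF dr] by simp
  ultimately show ?thesis using E(1) by blast
qed

theorem lemma10:
  shows "\<exists>C C\<^sub>1 C\<^sub>2 C\<^sub>3 :: real. C > 0 \<and> C\<^sub>1 > 0 \<and> C\<^sub>2 > 0 \<and> C\<^sub>3 > 0 \<and>
    (\<forall>d r n :: nat. d \<ge> 1 \<longrightarrow> r \<ge> 1 \<longrightarrow> real n \<ge> C\<^sub>3 * real d * (real r)\<^sup>2 \<longrightarrow>
      (\<exists>E \<in> sets (goe_sample_space n d).
         E \<subseteq> {\<omega> \<in> space (goe_sample_space n d).
                 \<forall>V. spec_norm d r V \<le> 1 \<longrightarrow>
                   spec_norm d d (XsX_minus_I n d (goe_mat \<omega>) (outer_VVt r V))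
                     \<le> C * real r * sqrt (real d) / sqrt (real n)} \<and>
         measure (goe_sample_space n d) E
           \<ge> 1 - 2 * exp (- C\<^sub>1 * real d * real r) - 2 * exp (- C\<^sub>2 * real n)))"
proof (rule exI[of _ 160], rule exI[of _ 1], rule exI[of _ 1], rule exI[of _ 1600], intro conjI allI impI)
  fix d r n :: nat
  assume "d \<ge> 1" "r \<ge> 1" "real n \<ge> 1600 * real d * (real r)\<^sup>2"
  then have "\<exists>E \<in> sets (goe_sample_space n d).
    E \<subseteq> {\<omega> \<in> space (goe_sample_space n d). \<forall>V. spec_norm d r V \<le> 1 \<longrightarrow>
      spec_norm d d (XsX_minus_I n d (goe_mat \<omega>) (outer_VVt r V)) \<le> 160 * real r * sqrt (real d) / sqrt (real n)} \<and>
    measure (goe_sample_space n d) E \<ge> 1 - 2 * exp (- real d * real r)"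
    by (rule goe_XsX_minus_I_bound)
  moreover have "1 - 2 * exp (- 1 * real d * real r) - 2 * exp (- 1 * real n) \<le> 1 - 2 * exp (- real d * real r)"
    by simp
  ultimately show "\<exists>E \<in> sets (goe_sample_space n d).
      E \<subseteq> {\<omega> \<in> space (goe_sample_space n d). \<forall>V. spec_norm d r V \<le> 1 \<longrightarrow>
        spec_norm d d (XsX_minus_I n d (goe_mat \<omega>) (outer_VVt r V)) \<le> 160 * real r * sqrt (real d) / sqrt (real n)} \<and>
      measure (goe_sample_space n d) E \<ge> 1 - 2 * exp (- 1 * real d * real r) - 2 * exp (- 1 * real n)"
    by (meson order_trans)
qed simp_all

end
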